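(* A biconnected graph $G$ is 2.5-connected if and only if no cycle among the triconnected components of $G$ contains a non-virtual edge.
   Context: Graphs are finite, may have parallel edges, no loops; $G$ itself has no virtual edges. Biconnected: connected and for all pairwise distinct $u,v,w$ there is a $u$-$v$ path avoiding $w$. $G$ is 2.5-connected if it is biconnected and there is no $(c,e)\in V(G)\times E(G)$ such that $G-e-c$ is disconnected (when $G$ is not a triangle). Splits: for biconnected $H$ and $u,v\in V(H)$, edges are in the same separation class iff they lie on a common (possibly closed) path with neither $u$ nor $v$ internal; $\{u,v\}$ is a separation pair if some union $E'$ of some but not all classes has $\min\{|E'|,|E(H)\setminus E'|\}\ge2$; a split replaces $H$ by $H[E']+e_1$ and $H[E(H)\setminus E']+e_2$ with new edges $e_1,e_2$ joining $u,v$; these new edges are virtual and correspond to each other; all other edges stem from $G$ and are non-virtual. Triconnected: biconnected without separation pair. Splitting until impossible gives triangles, 3-edges (two vertices, three parallel edges) and other triconnected graphs; merging (gluing at corresponding virtual edges and deleting them) the triangles as much as possible into cycles and the 3-edges as much as possible into multiedges yields the triconnected components of $G$. *)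

theory Defs
  imports Main
begin

record ('v, 'e) mgraph =
  verts :: "'v set"
  edges :: "'e set"
  ends  :: "'e \<Rightarrow> 'v set"

definition wf_graph :: "('v, 'e) mgraph \<Rightarrow> bool" where
  "wf_graph G \<longleftrightarrow> finite (verts G) \<and> finite (edges G) \<and>
     (\<forall>e\<in>edges G. ends G e \<subseteq> verts G \<and> card (ends G e) = 2)"

definition is_walk :: "('v, 'e) mgraph \<Rightarrow> 'v list \<Rightarrow> 'e list \<Rightarrow> bool" where
  "is_walk G vs es \<longleftrightarrow> length vs = Suc (length es) \<and> set vs \<subseteq> verts G \<and> set es \<subseteq> edges G \<and>
     (\<forall>i<length es. ends G (es ! i) = {vs ! i, vs ! Suc i})"

definition open_path :: "('v, 'e) mgraph \<Rightarrow> 'v list \<Rightarrow> 'e list \<Rightarrow> bool" where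
  "open_path G vs es \<longleftrightarrow> is_walk G vs es \<and> distinct vs"

definition closed_path :: "('v, 'e) mgraph \<Rightarrow> 'v list \<Rightarrow> 'e list \<Rightarrow> bool" where
  "closed_path G vs es \<longleftrightarrow> is_walk G vs es \<and> length es \<ge> 2 \<and> hd vs = last vs \<and>
     distinct (tl vs) \<and> distinct es"

definition internal_verts :: "'v list \<Rightarrow> 'v set" where
  "internal_verts vs = set (butlast (tl vs))"

definition connected_graph :: "('v, 'e) mgraph \<Rightarrow> bool" where
  "connected_graph G \<longleftrightarrow>
     (\<forall>x\<in>verts G. \<forall>y\<in>verts G. \<exists>vs es. open_path G vs es \<and> hd vs = x \<and> last vs = y)"

definition biconnected :: "('v, 'e) mgraph \<Rightarrow> bool" where
  "biconnected G \<longleftrightarrow> connected_graph G \<and>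
     (\<forall>u\<in>verts G. \<forall>v\<in>verts G. \<forall>w\<in>verts G. u \<noteq> v \<and> u \<noteq> w \<and> v \<noteq> w \<longrightarrow>
        (\<exists>vs es. open_path G vs es \<and> hd vs = u \<and> last vs = v \<and> w \<notin> set vs))"

definition del_edge_vert :: "('v, 'e) mgraph \<Rightarrow> 'e \<Rightarrow> 'v \<Rightarrow> ('v, 'e) mgraph" where
  "del_edge_vert G e c =
     \<lparr>verts = verts G - {c}, edges = {f \<in> edges G - {e}. c \<notin> ends G f}, ends = ends G\<rparr>"

definition is_cycle :: "('v, 'e) mgraph \<Rightarrow> bool" where
  "is_cycle G \<longleftrightarrow> (\<exists>vs es. closed_path G vs es \<and> set vs = verts G \<and> set es = edges G \<and>
     length es \<ge> 3)"

definition is_triangle :: "('v, 'e) mgraph \<Rightarrow> bool" where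
  "is_triangle G \<longleftrightarrow> is_cycle G \<and> card (edges G) = 3"

definition is_multiedge :: "('v, 'e) mgraph \<Rightarrow> bool" where
  "is_multiedge G \<longleftrightarrow> card (verts G) = 2 \<and> card (edges G) \<ge> 3 \<and>
     (\<forall>e\<in>edges G. ends G e = verts G)"

definition two_half_connected :: "('v, 'e) mgraph \<Rightarrow> bool" where
  "two_half_connected G \<longleftrightarrow> biconnected G \<and>
     (\<not> is_triangle G \<longrightarrow>
        \<not> (\<exists>c\<in>verts G. \<exists>e\<in>edges G. \<not> connected_graph (del_edge_vert G e c)))"

definition same_sep_class :: "('v, 'e) mgraph \<Rightarrow> 'v \<Rightarrow> 'v \<Rightarrow> 'e \<Rightarrow> 'e \<Rightarrow> bool" where
  "same_sep_class H u v e f \<longleftrightarrow>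
     (\<exists>vs es. (open_path H vs es \<or> closed_path H vs es) \<and> e \<in> set es \<and> f \<in> set es \<and>
        u \<notin> internal_verts vs \<and> v \<notin> internal_verts vs)"

definition sep_split_set :: "('v, 'e) mgraph \<Rightarrow> 'v \<Rightarrow> 'v \<Rightarrow> 'e set \<Rightarrow> bool" where
  "sep_split_set H u v F \<longleftrightarrow> u \<in> verts H \<and> v \<in> verts H \<and> u \<noteq> v \<and> F \<subseteq> edges H \<and>
     (\<forall>e\<in>F. \<forall>f\<in>edges H. same_sep_class H u v e f \<longrightarrow> f \<in> F) \<and>
     card F \<ge> 2 \<and> card (edges H - F) \<ge> 2"

definition has_sep_pair :: "('v, 'e) mgraph \<Rightarrow> bool" where
  "has_sep_pair H \<longleftrightarrow> (\<exists>u v F. sep_split_set H u v F)"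

definition triconnected :: "('v, 'e) mgraph \<Rightarrow> bool" where
  "triconnected H \<longleftrightarrow> biconnected H \<and> \<not> has_sep_pair H"

text \<open>Graphs occurring in the decomposition have edges of type 'e + nat:
  Inl e is the non-virtual edge e of G, Inr n is a virtual edge. The two corresponding
  virtual edges created by one split carry the same (fresh) label Inr n.\<close>

definition embed_graph :: "('v, 'e) mgraph \<Rightarrow> ('v, 'e + nat) mgraph" where
  "embed_graph G = \<lparr>verts = verts G, edges = Inl ` edges G,
     ends = case_sum (ends G) (\<lambda>_. {})\<rparr>"

definition split_piece ::
  "('v, 'e + nat) mgraph \<Rightarrow> 'v \<Rightarrow> 'v \<Rightarrow> ('e + nat) set \<Rightarrow> nat \<Rightarrow> ('v, 'e + nat) mgraph" where
  "split_piece H u v F n = \<lparr>verts = (\<Union>e\<in>F. ends H e) \<union> {u, v}, edges = F \<union> {Inr n},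
     ends = (ends H)(Inr n := {u, v})\<rparr>"

definition split_step :: "('v, 'e + nat) mgraph set \<Rightarrow> ('v, 'e + nat) mgraph set \<Rightarrow> bool" where
  "split_step D D' \<longleftrightarrow> (\<exists>H\<in>D. \<exists>u v F n. biconnected H \<and> sep_split_set H u v F \<and>
     (\<forall>H'\<in>D. Inr n \<notin> edges H') \<and>
     D' = (D - {H}) \<union> {split_piece H u v F n, split_piece H u v (edges H - F) n})"

definition merge_graphs ::
  "('v, 'e + nat) mgraph \<Rightarrow> ('v, 'e + nat) mgraph \<Rightarrow> nat \<Rightarrow> ('v, 'e + nat) mgraph" where
  "merge_graphs H1 H2 n = \<lparr>verts = verts H1 \<union> verts H2,
     edges = (edges H1 \<union> edges H2) - {Inr n},
     ends = (\<lambda>e. if e \<in> edges H1 then ends H1 e else ends H2 e)\<rparr>"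

definition mergeable :: "('v, 'e + nat) mgraph \<Rightarrow> ('v, 'e + nat) mgraph \<Rightarrow> nat \<Rightarrow> bool" where
  "mergeable H1 H2 n \<longleftrightarrow> H1 \<noteq> H2 \<and> Inr n \<in> edges H1 \<and> Inr n \<in> edges H2 \<and>
     ((is_cycle H1 \<and> is_cycle H2) \<or> (is_multiedge H1 \<and> is_multiedge H2))"

definition merge_step :: "('v, 'e + nat) mgraph set \<Rightarrow> ('v, 'e + nat) mgraph set \<Rightarrow> bool" where
  "merge_step D D' \<longleftrightarrow> (\<exists>H1\<in>D. \<exists>H2\<in>D. \<exists>n. mergeable H1 H2 n \<and>
     D' = (D - {H1, H2}) \<union> {merge_graphs H1 H2 n})"

definition triconnected_components :: "('v, 'e) mgraph \<Rightarrow> ('v, 'e + nat) mgraph set \<Rightarrow> bool" where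
  "triconnected_components G C \<longleftrightarrow>
     (\<exists>D. split_step\<^sup>*\<^sup>* {embed_graph G} D \<and>
          (\<forall>H\<in>D. \<not> (biconnected H \<and> has_sep_pair H)) \<and>
          merge_step\<^sup>*\<^sup>* D C \<and>
          \<not> (\<exists>H1\<in>C. \<exists>H2\<in>C. \<exists>n. mergeable H1 H2 n))"

end

theory Submission
  imports Defs
begin

(* Both sides of the equivalence are about cut pairs: an edge g = xy together with a vertex c
   not on g such that x and y are disconnected in H - g - c. A biconnected graph other than a
   triangle is 2.5-connected iff it has no cut pair.

   Splitting at a separation pair moves a cut pair on a real edge of G into the split component
   containing that edge, and every cut pair on a real edge of a split component lifts back to G.
   When no further split is possible the components are triconnected or not biconnected; the
   split components stay biconnected, and a triconnected graph with a cut pair is a triangle,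
   while every edge of a cycle belongs to a cut pair. So G has a cut pair iff, before merging,
   some cycle carries a real edge.

   Merging preserves this, since cycles are merged only with cycles, and merging two multiedges
   never yields a cycle. That two merged cycles form a cycle again needs that graphs sharing a
   virtual edge meet only in that edge and its two ends; this follows by tracking, for every
   virtual edge, the set of edges of G it stands for. *)

section \<open>Reachability in restricted subgraphs\<close>

inductive reach :: "('v, 'e) mgraph \<Rightarrow> 'e set \<Rightarrow> 'v set \<Rightarrow> 'v \<Rightarrow> 'v \<Rightarrow> bool"
  for H E A where
  reach_refl: "a \<in> A \<Longrightarrow> a \<in> verts H \<Longrightarrow> reach H E A a a"
| reach_step: "reach H E A a b \<Longrightarrow> f \<in> E \<Longrightarrow> f \<in> edges H \<Longrightarrow> ends H f = {b, c} \<Longrightarrow>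
     c \<in> A \<Longrightarrow> c \<in> verts H \<Longrightarrow> reach H E A a c"

lemma reachD: "reach H E A a b \<Longrightarrow> a \<in> A \<and> a \<in> verts H \<and> b \<in> A \<and> b \<in> verts H"
  by (induction rule: reach.induct) auto

lemma reach_trans: "reach H E A a b \<Longrightarrow> reach H E A b c \<Longrightarrow> reach H E A a c"
  by (rotate_tac, induction rule: reach.induct) (auto intro: reach_step)

lemma reach_edge:
  "f \<in> E \<Longrightarrow> f \<in> edges H \<Longrightarrow> ends H f = {b, c} \<Longrightarrow> b \<in> A \<Longrightarrow> b \<in> verts H \<Longrightarrow>
   c \<in> A \<Longrightarrow> c \<in> verts H \<Longrightarrow> reach H E A b c"
  by (rule reach_step[OF reach_refl]) auto

lemma reach_sym: "reach H E A a b \<Longrightarrow> reach H E A b a"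
proof (induction rule: reach.induct)
  case (reach_refl a)
  then show ?case by (rule reach.reach_refl)
next
  case (reach_step a b f c)
  have "reach H E A c b"
    using reach_step reachD[OF reach_step.hyps(1)]
      by (intro reach_edge[of f]) (auto simp: insert_commute)
  then show ?case using reach_step.IH reach_trans by metis
qed

lemma reach_transfer:
  assumes "reach H E A a b"
    and "\<And>f x y. f \<in> E \<Longrightarrow> f \<in> edges H \<Longrightarrow> ends H f = {x, y} \<Longrightarrow> x \<in> A \<Longrightarrow> y \<in> A \<Longrightarrow>
       x \<in> verts H \<Longrightarrow> y \<in> verts H \<Longrightarrow> f \<in> E' \<and> f \<in> edges H' \<and> ends H' f = {x, y}"
    and "\<And>x. x \<in> A \<Longrightarrow> x \<in> verts H \<Longrightarrow> x \<in> A' \<and> x \<in> verts H'"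
  shows "reach H' E' A' a b"
  using assms(1)
proof (induction rule: reach.induct)
  case (reach_refl a)
  then show ?case using assms(3) by (auto intro: reach.reach_refl)
next
  case (reach_step a b f c)
  from assms(2)[OF reach_step.hyps(2-4)] reachD[OF reach_step.hyps(1)] reach_step.hyps(5,6)
    assms(3)[of c]
  show ?case by (auto intro: reach.reach_step[OF reach_step.IH])
qed

lemma reach_mono:
  "reach H E A a b \<Longrightarrow> E \<inter> edges H \<subseteq> E' \<Longrightarrow> A \<inter> verts H \<subseteq> A' \<Longrightarrow> reach H E' A' a b"
  by (erule reach_transfer) auto

lemma reach_first_edge:
  "reach H E A a b \<Longrightarrow>
   a = b \<or> (\<exists>f z. f \<in> E \<and> f \<in> edges H \<and> ends H f = {a, z} \<and> z \<in> A \<and> z \<in> verts H)"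
  by (induction rule: reach.induct) blast+

lemma reach_closed:
  assumes "reach H E A a b" "a \<in> S"
    and "\<And>x f y. x \<in> S \<Longrightarrow> f \<in> E \<Longrightarrow> f \<in> edges H \<Longrightarrow> ends H f = {x, y} \<Longrightarrow>
           y \<in> A \<Longrightarrow> y \<in> verts H \<Longrightarrow> y \<in> S"
  shows "b \<in> S"
  using assms(1,2) by (induction rule: reach.induct) (use assms(3) in blast)+

lemma reach_exit:
  assumes "reach H E A a b" "a \<in> S"
  shows "reach H E (A \<inter> S) a b \<or>
    (\<exists>z f c. reach H E (A \<inter> S) a z \<and> f \<in> E \<and> f \<in> edges H \<and> ends H f = {z, c} \<and>
       c \<in> A \<and> c \<in> verts H \<and> c \<notin> S)"
  using assms
proof (induction rule: reach.induct)
  case (reach_refl a)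
  then show ?case by (intro disjI1 reach.reach_refl) auto
next
  case (reach_step a b f c)
  from reach_step.IH[OF reach_step.prems] show ?case
  proof
    assume "reach H E (A \<inter> S) a b"
    then show ?thesis
      using reach_step.hyps reach.reach_step[of H E "A \<inter> S" a b f c] by (cases "c \<in> S") blast+
  qed blast
qed

lemma walk_reach:
  assumes "is_walk H vs es" "set es \<subseteq> E" "set vs \<subseteq> A"
  shows "reach H E A (hd vs) (last vs)"
proof -
  have ne: "vs \<noteq> []" and len: "length vs = Suc (length es)"
    using assms(1) by (auto simp: is_walk_def)
  have "reach H E A (vs ! 0) (vs ! i)" if "i \<le> length es" for i
    using that
  proof (induction i)
    case 0
    have "vs ! 0 \<in> set vs" using ne by simp
    then show ?case using assms by (intro reach_refl) (auto simp: is_walk_def)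
  next
    case (Suc i)
    have "vs ! Suc i \<in> set vs" "es ! i \<in> set es" using Suc.prems len by auto
    then show ?case
      using Suc assms by (intro reach_step[OF Suc.IH, where f = "es ! i"]) (auto simp: is_walk_def)
  qed
  then show ?thesis using ne len by (simp add: hd_conv_nth last_conv_nth)
qed

lemma walk_take:
  assumes "is_walk H vs es" "j \<le> length es"
  shows "is_walk H (take (Suc j) vs) (take j es)"
  using assms unfolding is_walk_def by (auto dest: in_set_takeD)

lemma walk_snoc:
  assumes "is_walk H vs es" "f \<in> edges H" "ends H f = {last vs, c}" "c \<in> verts H"
  shows "is_walk H (vs @ [c]) (es @ [f])"
proof -
  have ne: "vs \<noteq> []" and len: "length vs = Suc (length es)"
    using assms(1) by (auto simp: is_walk_def)
  have "last vs = vs ! length es" using ne len by (simp add: last_conv_nth)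
  then show ?thesis
    using assms len by (auto simp: is_walk_def nth_append less_Suc_eq)
qed

lemma reach_open_path:
  assumes "reach H E A a b"
  shows "\<exists>vs es. open_path H vs es \<and> hd vs = a \<and> last vs = b \<and> set vs \<subseteq> A \<and> set es \<subseteq> E"
  using assms
proof (induction rule: reach.induct)
  case (reach_refl a)
  then show ?case by (intro exI[of _ "[a]"] exI[of _ "[]"]) (auto simp: open_path_def is_walk_def)
next
  case (reach_step a b f c)
  then obtain vs es where p: "open_path H vs es" "hd vs = a" "last vs = b" "set vs \<subseteq> A" "set es \<subseteq> E"
    by blast
  have w: "is_walk H vs es" and d: "distinct vs" using p(1) by (auto simp: open_path_def)
  have ne: "vs \<noteq> []" and len: "length vs = Suc (length es)" using w by (auto simp: is_walk_def)
  show ?case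
  proof (cases "c \<in> set vs")
    case True
    then obtain j where j: "j < length vs" "vs ! j = c" by (auto simp: in_set_conv_nth)
    have "is_walk H (take (Suc j) vs) (take j es)" using walk_take[OF w, of j] j len by simp
    moreover have "last (take (Suc j) vs) = c" using j by (simp add: take_Suc_conv_app_nth)
    ultimately show ?thesis using p ne d
      by (intro exI[of _ "take (Suc j) vs"] exI[of _ "take j es"])
         (auto simp: open_path_def dest: in_set_takeD)
  next
    case False
    have "is_walk H (vs @ [c]) (es @ [f])" using walk_snoc[OF w] reach_step.hyps p(3) by simp
    then show ?thesis using d False p ne reach_step.hyps
      by (intro exI[of _ "vs @ [c]"] exI[of _ "es @ [f]"]) (auto simp: open_path_def)
  qed
qed

lemma open_path_reach:
  "open_path H vs es \<Longrightarrow> set vs \<subseteq> A \<Longrightarrow> set es \<subseteq> E \<Longrightarrow> reach H E A (hd vs) (last vs)"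
  unfolding open_path_def using walk_reach by blast

lemma open_path_avoiding_iff_reach:
  "(\<exists>vs es. open_path H vs es \<and> hd vs = a \<and> last vs = b \<and> set vs \<inter> W = {}) \<longleftrightarrow>
   reach H (edges H) (verts H - W) a b"
proof
  assume "\<exists>vs es. open_path H vs es \<and> hd vs = a \<and> last vs = b \<and> set vs \<inter> W = {}"
  then obtain vs es where "open_path H vs es" "hd vs = a" "last vs = b" "set vs \<inter> W = {}" by blast
  then show "reach H (edges H) (verts H - W) a b"
    using open_path_reach[of H vs es "verts H - W" "edges H"]
      by (auto simp: open_path_def is_walk_def)
next
  assume "reach H (edges H) (verts H - W) a b"
  from reach_open_path[OF this]
  show "\<exists>vs es. open_path H vs es \<and> hd vs = a \<and> last vs = b \<and> set vs \<inter> W = {}"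
    by blast
qed

lemma connected_graph_iff_reach:
  "connected_graph H \<longleftrightarrow> (\<forall>x\<in>verts H. \<forall>y\<in>verts H. reach H (edges H) (verts H) x y)"
  using open_path_avoiding_iff_reach[of H _ _ "{}"] unfolding connected_graph_def by simp

lemma biconnected_iff_reach:
  "biconnected H \<longleftrightarrow> connected_graph H \<and> (\<forall>u\<in>verts H. \<forall>v\<in>verts H. \<forall>w\<in>verts H.
      u \<noteq> v \<and> u \<noteq> w \<and> v \<noteq> w \<longrightarrow> reach H (edges H) (verts H - {w}) u v)"
  using open_path_avoiding_iff_reach[of H _ _ "{w}" for w] unfolding biconnected_def by simp

section \<open>Cut pairs\<close>

lemma reach_replace_edge:
  assumes "reach H E A a b" "ends H e = {x, y}" "reach H (E - {e}) A x y"
  shows "reach H (E - {e}) A a b"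
  using assms(1)
proof (induction rule: reach.induct)
  case (reach_refl a)
  then show ?case by (rule reach.reach_refl)
next
  case (reach_step a b f c)
  show ?case
  proof (cases "f = e")
    case True
    then have "{b, c} = {x, y}" using reach_step.hyps(4) assms(2) by simp
    then have "reach H (E - {e}) A b c"
      using assms(3) reach_sym[OF assms(3)] by (auto simp: doubleton_eq_iff)
    then show ?thesis using reach_trans reach_step.IH by metis
  next
    case False
    then show ?thesis
      using reach_step by (intro reach.reach_step[OF reach_step.IH, of f]) auto
  qed
qed

lemma wf_graph_ends:
  assumes "wf_graph H" "g \<in> edges H"
  shows "ends H g \<subseteq> verts H" "card (ends H g) = 2"
  using assms by (auto simp: wf_graph_def)

lemma wf_graph_endsE:
  assumes "wf_graph H" "g \<in> edges H"
  obtains x y where "ends H g = {x, y}" "x \<noteq> y" "x \<in> verts H" "y \<in> verts H"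
  using wf_graph_ends[OF assms] by (auto simp: card_2_iff)

lemma wf_graph_other_end:
  assumes "wf_graph H" "g \<in> edges H" "z \<in> ends H g"
  obtains a where "ends H g = {z, a}" "a \<noteq> z" "a \<in> verts H" "z \<in> verts H"
proof -
  obtain x y where "ends H g = {x, y}" "x \<noteq> y" "x \<in> verts H" "y \<in> verts H"
    using wf_graph_endsE[OF assms(1,2)] .
  with assms(3) that show ?thesis by (auto simp: insert_commute)
qed

lemma card_doubleton_neq: "card {b, c} = 2 \<Longrightarrow> b \<noteq> c"
  by (cases "b = c") auto

definition cut_pair :: "('v, 'e) mgraph \<Rightarrow> 'e \<Rightarrow> 'v \<Rightarrow> bool" where
  "cut_pair H g c \<longleftrightarrow> g \<in> edges H \<and> c \<in> verts H \<and> c \<notin> ends H g \<and>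
     (\<forall>x y. ends H g = {x, y} \<longrightarrow> \<not> reach H (edges H - {g}) (verts H - {c}) x y)"

lemma cut_pairI:
  "g \<in> edges H \<Longrightarrow> ends H g = {x, y} \<Longrightarrow> c \<in> verts H \<Longrightarrow> c \<notin> {x, y} \<Longrightarrow>
   \<not> reach H (edges H - {g}) (verts H - {c}) x y \<Longrightarrow> cut_pair H g c"
  unfolding cut_pair_def by (auto simp: doubleton_eq_iff dest: reach_sym)

lemma cut_pairD:
  assumes "cut_pair H g c" "ends H g = {x, y}"
  shows "g \<in> edges H" "c \<in> verts H" "c \<notin> {x, y}"
    "\<not> reach H (edges H - {g}) (verts H - {c}) x y"
  using assms unfolding cut_pair_def by auto

lemma connected_del_edge_vert_iff_reach:
  "connected_graph (del_edge_vert G e c) \<longleftrightarrow>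
     (\<forall>a\<in>verts G - {c}. \<forall>b\<in>verts G - {c}. reach G (edges G - {e}) (verts G - {c}) a b)"
proof -
  let ?D = "del_edge_vert G e c"
  have "reach G (edges G - {e}) (verts G - {c}) a b \<longleftrightarrow> reach ?D (edges ?D) (verts ?D) a b" for a b
  proof
    show "reach G (edges G - {e}) (verts G - {c}) a b \<Longrightarrow> reach ?D (edges ?D) (verts ?D) a b"
      by (erule reach_transfer) (auto simp: del_edge_vert_def)
    show "reach ?D (edges ?D) (verts ?D) a b \<Longrightarrow> reach G (edges G - {e}) (verts G - {c}) a b"
      by (erule reach_transfer) (auto simp: del_edge_vert_def)
  qed
  then show ?thesis unfolding connected_graph_iff_reach by (simp add: del_edge_vert_def)
qed

lemma connected_del_edge_vert_iff_no_cut_pair: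
  assumes wf: "wf_graph G" and bc: "biconnected G" and c: "c \<in> verts G" and e: "e \<in> edges G"
  shows "connected_graph (del_edge_vert G e c) \<longleftrightarrow> \<not> cut_pair G e c"
proof -
  obtain x y where xy: "ends G e = {x, y}" "x \<in> verts G" "y \<in> verts G"
    using wf_graph_endsE[OF wf e] by metis
  let ?R = "reach G (edges G - {e}) (verts G - {c})"
  have all: "?R a b" if "c \<in> {x, y} \<or> ?R x y" "a \<in> verts G - {c}" "b \<in> verts G - {c}" for a b
  proof (cases "a = b")
    case True
    then show ?thesis using that by (auto intro: reach_refl)
  next
    case False
    \<comment> \<open>e cannot be needed if c is one of its ends, and can be bypassed otherwise\<close>
    then have r: "reach G (edges G) (verts G - {c}) a b"
      using bc that(2,3) c unfolding biconnected_iff_reach by auto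
    from that(1) show ?thesis
    proof
      assume "c \<in> {x, y}"
      then show ?thesis by (rule_tac reach_transfer[OF r]) (use xy in \<open>auto simp: doubleton_eq_iff\<close>)
    qed (rule reach_replace_edge[OF r xy(1)])
  qed
  have "?R x y" if "c \<notin> {x, y}" "connected_graph (del_edge_vert G e c)"
    using that xy unfolding connected_del_edge_vert_iff_reach by auto
  then show ?thesis
    using all cut_pairI[OF e xy(1) c] cut_pairD[of G e c, OF _ xy(1)]
    unfolding connected_del_edge_vert_iff_reach by blast
qed

lemma two_half_connected_iff_no_cut_pair:
  assumes "wf_graph G" "biconnected G" "\<not> is_triangle G"
  shows "two_half_connected G \<longleftrightarrow> \<not> (\<exists>e c. cut_pair G e c)"
  using connected_del_edge_vert_iff_no_cut_pair[OF assms(1,2)] assms(2,3)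
  unfolding two_half_connected_def cut_pair_def by blast

section \<open>Separation classes and split pieces\<close>

lemma same_sep_class_common_vertex:
  assumes wf: "wf_graph H" and g: "g \<in> edges H" and h: "h \<in> edges H" "g \<noteq> h"
    and z: "z \<in> ends H g" "z \<in> ends H h" "z \<notin> {u, v}"
  shows "same_sep_class H u v g h"
proof -
  obtain a where a: "ends H g = {z, a}" "a \<noteq> z" "a \<in> verts H" "z \<in> verts H"
    using wf_graph_other_end[OF wf g z(1)] .
  obtain b where b: "ends H h = {z, b}" "b \<noteq> z" "b \<in> verts H"
    using wf_graph_other_end[OF wf h(1) z(2)] .
  have iv: "internal_verts [a, z, b] = {z}" by (simp add: internal_verts_def)
  show ?thesis
  proof (cases "a = b")
    case False
    have "open_path H [a, z, b] [g, h]"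
      unfolding open_path_def is_walk_def using a b g h False
      by (auto simp: less_Suc_eq insert_commute)
    then show ?thesis unfolding same_sep_class_def using iv z(3) by fastforce
  next
    case True
    have "closed_path H [a, z, a] [g, h]"
      unfolding closed_path_def is_walk_def using a b g h True
      by (auto simp: less_Suc_eq insert_commute)
    then show ?thesis unfolding same_sep_class_def using iv z(3) True by fastforce
  qed
qed

lemma sep_split_setD:
  assumes "sep_split_set H u v F"
  shows "u \<in> verts H" "v \<in> verts H" "u \<noteq> v" "F \<subseteq> edges H" "card F \<ge> 2" "card (edges H - F) \<ge> 2"
  using assms by (auto simp: sep_split_set_def)

lemma sep_split_set_nonempty:
  assumes "sep_split_set H u v F"
  obtains f k where "f \<in> F" "k \<in> edges H - F"
proof -
  have "F \<noteq> {}" "edges H - F \<noteq> {}"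
    using sep_split_setD(5,6)[OF assms] by (metis card.empty not_numeral_le_zero)+
  then show ?thesis using that by blast
qed

lemma sep_split_set_common_vertex:
  assumes wf: "wf_graph H" and s: "sep_split_set H u v F" and g: "g \<in> F"
    and h: "h \<in> edges H" "h \<notin> F" and z: "z \<in> ends H g" "z \<in> ends H h"
  shows "z \<in> {u, v}"
proof (rule ccontr)
  assume "z \<notin> {u, v}"
  then have "same_sep_class H u v g h"
    using same_sep_class_common_vertex[OF wf _ h(1) _ z] g h sep_split_setD(4)[OF s] by auto
  then show False using s g h unfolding sep_split_set_def by auto
qed

lemma sep_split_set_complement:
  assumes "sep_split_set H u v F"
  shows "sep_split_set H u v (edges H - F)"
proof -
  have "same_sep_class H u v f e" if "same_sep_class H u v e f" for e f
    using that unfolding same_sep_class_def by blast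
  moreover have "edges H - (edges H - F) = F" using assms by (auto simp: sep_split_set_def)
  ultimately show ?thesis using assms unfolding sep_split_set_def by auto
qed

lemma walk_edges_invariant:
  assumes w: "is_walk H vs es" and uv: "u \<notin> internal_verts vs" "v \<notin> internal_verts vs"
    and S: "\<And>h1 h2 z. h1 \<in> edges H \<Longrightarrow> h2 \<in> edges H \<Longrightarrow> z \<in> ends H h1 \<Longrightarrow> z \<in> ends H h2 \<Longrightarrow>
              z \<notin> {u, v} \<Longrightarrow> S h1 = S h2"
  shows "i < length es \<Longrightarrow> S (es ! i) = S (es ! 0)"
proof (induction i)
  case (Suc i)
  have len: "length vs = Suc (length es)" using w by (simp add: is_walk_def)
  have "butlast (tl vs) ! i = vs ! Suc i" "i < length (butlast (tl vs))"
    using Suc.prems len by (simp_all add: nth_butlast nth_tl)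
  then have "vs ! Suc i \<in> internal_verts vs" unfolding internal_verts_def by (metis nth_mem)
  moreover have "vs ! Suc i \<in> ends H (es ! i)" "vs ! Suc i \<in> ends H (es ! Suc i)"
    "es ! i \<in> edges H" "es ! Suc i \<in> edges H"
    using w Suc.prems by (auto simp: is_walk_def)
  ultimately have "S (es ! i) = S (es ! Suc i)" using S[of "es ! i" "es ! Suc i"] uv by blast
  then show ?case using Suc by simp
qed simp

lemma same_sep_class_invariant:
  assumes "same_sep_class H u v g h"
    and "\<And>h1 h2 z. h1 \<in> edges H \<Longrightarrow> h2 \<in> edges H \<Longrightarrow> z \<in> ends H h1 \<Longrightarrow> z \<in> ends H h2 \<Longrightarrow>
           z \<notin> {u, v} \<Longrightarrow> S h1 = S h2"
  shows "S g = S h"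
proof -
  obtain vs es where p: "open_path H vs es \<or> closed_path H vs es" "g \<in> set es" "h \<in> set es"
    "u \<notin> internal_verts vs" "v \<notin> internal_verts vs"
    using assms(1) unfolding same_sep_class_def by blast
  have w: "is_walk H vs es" using p(1) by (auto simp: open_path_def closed_path_def)
  have inv: "S (es ! i) = S (es ! 0)" if "i < length es" for i
    using assms(2) that by (rule walk_edges_invariant[OF w p(4,5)])
  obtain i j where "i < length es" "g = es ! i" "j < length es" "h = es ! j"
    using p(2,3) by (auto simp: in_set_conv_nth)
  then show ?thesis using inv by metis
qed

lemma sep_class_closed_vertex_set:
  assumes wf: "wf_graph H"
    and closed: "\<And>h w z. h \<in> edges H \<Longrightarrow> ends H h = {w, z} \<Longrightarrow> w \<in> S \<Longrightarrow> z \<in> S \<union> {u, v}"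
    and F: "F = {h \<in> edges H. ends H h \<inter> S \<noteq> {} \<or> ends H h = {u, v}}"
  shows "\<forall>e\<in>F. \<forall>f\<in>edges H. same_sep_class H u v e f \<longrightarrow> f \<in> F"
proof (intro ballI impI)
  fix e f assume e: "e \<in> F" and f: "f \<in> edges H" and cl: "same_sep_class H u v e f"
  let ?S = "\<lambda>h. ends H h \<inter> S \<noteq> {} \<or> ends H h = {u, v}"
  have touch: "ends H h2 \<inter> S \<noteq> {}" if h: "h1 \<in> edges H" "h2 \<in> edges H" "z \<in> ends H h1"
    "z \<in> ends H h2" "z \<notin> {u, v}" "ends H h1 \<inter> S \<noteq> {}" for h1 h2 z
  proof -
    obtain w where w: "ends H h1 = {z, w}" using wf_graph_other_end[OF wf h(1,3)] by blast
    have "z \<in> S"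
    proof (cases "z \<in> S")
      case False
      then have "w \<in> S" using w h(6) by auto
      then show ?thesis using closed[OF h(1)] w h(5) by (auto simp: insert_commute)
    qed
    then show ?thesis using h(4) by blast
  qed
  have "?S e = ?S f"
  proof (rule same_sep_class_invariant[OF cl])
    fix h1 h2 z assume h: "h1 \<in> edges H" "h2 \<in> edges H" "z \<in> ends H h1" "z \<in> ends H h2" "z \<notin> {u, v}"
    then have "ends H h1 \<noteq> {u, v}" "ends H h2 \<noteq> {u, v}" by auto
    then show "?S h1 = ?S h2" using touch[OF h] touch[OF h(2,1,4,3,5)] by blast
  qed
  then show "f \<in> F" using e f F by simp
qed

lemma sep_split_set_reach_pole:
  assumes wf: "wf_graph H" and bc: "biconnected H" and s: "sep_split_set H u v F"
    and f: "f \<in> F" and a: "a \<in> ends H f" "a \<notin> {u, v}" and ts: "{t, s} = {u, v}"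
  shows "reach H {g \<in> F. ends H g \<noteq> {u, v}} (\<Union>(ends H ` F)) a t"
proof -
  let ?F0 = "{g \<in> F. ends H g \<noteq> {u, v}}" and ?VF = "\<Union>(ends H ` F)"
  note uv = sep_split_setD(1-4)[OF s]
  have "f \<in> edges H" using f uv(4) by auto
  then have aV: "a \<in> verts H" using wf_graph_ends(1)[OF wf] a by auto
  have tsd: "t \<noteq> s" "t \<in> verts H" "s \<in> verts H" "a \<noteq> t" "a \<noteq> s"
    using ts uv a by (auto simp: doubleton_eq_iff)
  have r: "reach H (edges H) (verts H - {s}) a t"
    using bc tsd aV unfolding biconnected_iff_reach by auto
  have tS: "t \<notin> verts H - {u, v}" using ts by auto
  \<comment> \<open>follow a path from a to t avoiding s up to its first pole, which must be t\<close>
  from reach_exit[OF r, of "verts H - {u, v}"] a(2) aV tS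
    reachD[of H "edges H" "(verts H - {s}) \<inter> (verts H - {u, v})" a t]
  obtain z g c where zgc: "reach H (edges H) ((verts H - {s}) \<inter> (verts H - {u, v})) a z"
    "g \<in> edges H" "ends H g = {z, c}" "c \<in> verts H - {s}" "c \<notin> verts H - {u, v}"
    by blast
  have ct: "c = t" using zgc(4,5) ts by auto
  have rz: "reach H (edges H) (verts H - {u, v}) a z" using reach_mono[OF zgc(1)] by auto
  let ?S = "{y. reach H ?F0 (?VF - {u, v}) a y}"
  have inF: "g' \<in> F \<and> ends H g' \<noteq> {u, v}" if "x \<in> ?VF - {u, v}" "g' \<in> edges H" "x \<in> ends H g'"
    for x g'
  proof -
    from that obtain g0 where "g0 \<in> F" "x \<in> ends H g0" by auto
    then have "g' \<in> F" using sep_split_set_common_vertex[OF wf s, of g0 g' x] that by auto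
    then show ?thesis using that by auto
  qed
  have "a \<in> ?S" using a f aV by (auto intro: reach_refl)
  then have zS: "z \<in> ?S"
  proof (rule reach_closed[OF rz])
    fix x g' y assume h: "x \<in> ?S" "g' \<in> edges H" "g' \<in> edges H" "ends H g' = {x, y}"
      "y \<in> verts H - {u, v}" "y \<in> verts H"
    have "x \<in> ?VF - {u, v}" using h(1) reachD by fastforce
    then have g'F: "g' \<in> F \<and> ends H g' \<noteq> {u, v}" using inF[OF _ h(2)] h(4) by auto
    then have "y \<in> ?VF" using h(4) by blast
    have "reach H ?F0 (?VF - {u, v}) a x" using h(1) by simp
    then have "reach H ?F0 (?VF - {u, v}) a y"
      by (rule reach_step[where f = g']) (use h g'F \<open>y \<in> ?VF\<close> in auto)
    then show "y \<in> ?S" by simp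
  qed
  then have "z \<in> ?VF - {u, v}" using reachD by fastforce
  then have gF: "g \<in> F \<and> ends H g \<noteq> {u, v}" using inF[OF _ zgc(2)] zgc(3) by auto
  have "reach H ?F0 (?VF - {u, v}) a z" using zS by simp
  then have "reach H ?F0 ?VF a z" by (rule reach_mono) auto
  then show ?thesis by (rule reach_step[where f = g]) (use gF zgc ct tsd in auto)
qed

lemma sep_split_set_connects_poles:
  assumes wf: "wf_graph H" and bc: "biconnected H" and s: "sep_split_set H u v F" and f: "f \<in> F"
  shows "reach H ({g \<in> F. ends H g \<noteq> {u, v}} \<union> {f}) (\<Union>(ends H ` F)) u v"
proof (cases "ends H f = {u, v}")
  case True
  then show ?thesis using f sep_split_setD(1,2,4)[OF s] by (intro reach_edge[of f]) auto
next
  case False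
  have fE: "f \<in> edges H" using f sep_split_setD(4)[OF s] by auto
  obtain a where a: "a \<in> ends H f" "a \<notin> {u, v}"
  proof -
    obtain p q where "ends H f = {p, q}" "p \<noteq> q" using wf_graph_endsE[OF wf fE] by blast
    then show ?thesis using that False by auto
  qed
  have au: "reach H {g \<in> F. ends H g \<noteq> {u, v}} (\<Union>(ends H ` F)) a u"
    by (rule sep_split_set_reach_pole[OF wf bc s f a, where s = v]) auto
  have av: "reach H {g \<in> F. ends H g \<noteq> {u, v}} (\<Union>(ends H ` F)) a v"
    by (rule sep_split_set_reach_pole[OF wf bc s f a, where s = u]) auto
  have "reach H {g \<in> F. ends H g \<noteq> {u, v}} (\<Union>(ends H ` F)) u v"
    using reach_trans[OF reach_sym[OF au] av] .
  then show ?thesis by (rule reach_mono) auto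
qed

lemma split_piece_simps:
  "verts (split_piece H u v F n) = \<Union>(ends H ` F) \<union> {u, v}"
  "edges (split_piece H u v F n) = F \<union> {Inr n}"
  "ends (split_piece H u v F n) = (ends H)(Inr n := {u, v})"
  by (simp_all add: split_piece_def)

context
  fixes H :: "('v, 'e + nat) mgraph" and u v F n
  assumes wf: "wf_graph H" and sep: "sep_split_set H u v F" and fresh: "Inr n \<notin> edges H"
begin

lemma split_piece_verts_subset: "verts (split_piece H u v F n) \<subseteq> verts H"
  using sep_split_setD[OF sep] wf by (auto simp: split_piece_simps wf_graph_def)

lemma wf_split_piece: "wf_graph (split_piece H u v F n)"
proof -
  have F: "F \<subseteq> edges H" "finite F" using sep_split_setD(4)[OF sep] wf finite_subset
    by (auto simp: wf_graph_def)
  then have "finite (\<Union>(ends H ` F))"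
    using wf by (auto simp: wf_graph_def intro: finite_subset)
  then show ?thesis using F wf sep_split_setD[OF sep] by (auto simp: wf_graph_def split_piece_simps)
qed

lemma split_piece_common_vertex:
  assumes "g \<in> edges H" "g \<notin> F" "x \<in> ends H g" "x \<in> verts (split_piece H u v F n)"
  shows "x \<in> {u, v}"
  using assms sep_split_set_common_vertex[OF wf sep _ assms(1,2)] by (auto simp: split_piece_simps)

lemma reach_project_split_piece:
  assumes r: "reach H E A a b" and a: "a \<in> verts (split_piece H u v F n)"
  shows "(b \<in> verts (split_piece H u v F n) \<longrightarrow>
            reach (split_piece H u v F n) ((E \<inter> F) \<union> {Inr n}) A a b) \<and>
         (b \<notin> verts (split_piece H u v F n) \<longrightarrow>
            (\<exists>t\<in>{u, v}. reach (split_piece H u v F n) ((E \<inter> F) \<union> {Inr n}) A a t))"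
  using r a
proof (induction rule: reach.induct)
  case (reach_refl a)
  then show ?case by (auto intro: reach.reach_refl)
next
  case (reach_step a b g c)
  let ?P = "split_piece H u v F n" and ?E = "(E \<inter> F) \<union> {Inr n}"
  note b = sep_split_setD[OF sep]
  have uvP: "u \<in> verts ?P" "v \<in> verts ?P" by (auto simp: split_piece_simps)
  have nF: "Inr n \<notin> F" using fresh b(4) by auto
  have bc: "b \<noteq> c"
    using reach_step.hyps(4) wf_graph_ends(2)[OF wf reach_step.hyps(3)] card_doubleton_neq
    by metis
  \<comment> \<open>a detour outside the piece, from one of u, v to the other, is replaced by the virtual edge\<close>
  have virt: "reach ?P ?E A a c" if "reach ?P ?E A a t" "{t, c} = {u, v}" for t
    by (rule reach.reach_step[OF that(1), where f = "Inr n"])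
       (use that(2) reach_step.hyps(5) uvP b(3) in \<open>auto simp: split_piece_simps doubleton_eq_iff\<close>)
  have outside: "b \<in> {u, v}" "c \<in> {u, v}" if "g \<notin> F" "b \<in> verts ?P" "c \<in> verts ?P"
    using split_piece_common_vertex[OF reach_step.hyps(3) that(1)] reach_step.hyps(4) that(2,3)
    by auto
  show ?case
  proof (cases "b \<in> verts ?P")
    case True
    then have Rb: "reach ?P ?E A a b" using reach_step.IH reach_step.prems by blast
    show ?thesis
    proof (cases "c \<in> verts ?P")
      case cP: True
      show ?thesis
      proof (cases "g \<in> F")
        case True
        have "reach ?P ?E A a c"
          by (rule reach.reach_step[OF Rb, where f = g])
             (use True nF reach_step.hyps cP in \<open>auto simp: split_piece_simps\<close>)
        then show ?thesis using cP by simp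
      next
        case False
        then have "{b, c} = {u, v}" using outside True cP bc b(3) by auto
        then show ?thesis using virt[OF Rb] cP by simp
      qed
    next
      case cP: False
      have "g \<notin> F" using cP reach_step.hyps(4) by (auto simp: split_piece_simps)
      then have "b \<in> {u, v}"
        using split_piece_common_vertex[OF reach_step.hyps(3)] reach_step.hyps(4) True by auto
      then show ?thesis using Rb cP by blast
    qed
  next
    case False
    then obtain t where t: "t \<in> {u, v}" "reach ?P ?E A a t"
      using reach_step.IH reach_step.prems by blast
    show ?thesis
    proof (cases "c \<in> verts ?P")
      case cP: True
      have "g \<notin> F" using False reach_step.hyps(4) by (auto simp: split_piece_simps)
      then have "c \<in> {u, v}"
        using split_piece_common_vertex[OF reach_step.hyps(3)] reach_step.hyps(4) cP by auto
      then have "c = t \<or> {t, c} = {u, v}" using t by auto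
      then show ?thesis using virt[OF t(2)] t cP by auto
    next
      case cP: False
      then show ?thesis using t by blast
    qed
  qed
qed

lemma reach_project_split_piece_inside:
  "reach H E A a b \<Longrightarrow> a \<in> verts (split_piece H u v F n) \<Longrightarrow> b \<in> verts (split_piece H u v F n) \<Longrightarrow>
   reach (split_piece H u v F n) ((E \<inter> F) \<union> {Inr n}) A a b"
  using reach_project_split_piece by blast

lemma reach_lift_split_piece:
  assumes r: "reach (split_piece H u v F n) E1 A a b"
    and virt: "Inr n \<in> E1 \<Longrightarrow> u \<in> A \<Longrightarrow> v \<in> A \<Longrightarrow> reach H E2 A' u v"
    and EE: "E1 \<inter> F \<subseteq> E2" and AA: "A \<subseteq> A'"
  shows "reach H E2 A' a b"
  using r
proof (induction rule: reach.induct)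
  case (reach_refl a)
  then show ?case using split_piece_verts_subset AA by (auto intro: reach.reach_refl)
next
  case (reach_step a b g c)
  have bA: "b \<in> A" using reachD[OF reach_step.hyps(1)] by simp
  show ?case
  proof (cases "g = Inr n")
    case True
    then have bc: "{b, c} = {u, v}" using reach_step.hyps(4) by (simp add: split_piece_simps)
    then have "u \<in> A" "v \<in> A" using bA reach_step.hyps(5) by (auto simp: doubleton_eq_iff)
    then have ruv: "reach H E2 A' u v" using virt True reach_step.hyps(2) by simp
    have "reach H E2 A' b c" using bc ruv reach_sym[OF ruv] by (auto simp: doubleton_eq_iff)
    then show ?thesis using reach_trans reach_step.IH by metis
  next
    case False
    then have gF: "g \<in> F" using reach_step.hyps(3) by (simp add: split_piece_simps)
    have "c \<in> verts H" using split_piece_verts_subset reach_step.hyps(6) by auto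
    then show ?thesis
      by (intro reach.reach_step[OF reach_step.IH, where f = g])
         (use gF False EE AA reach_step.hyps sep_split_setD(4)[OF sep]
           in \<open>auto simp: split_piece_simps\<close>)
  qed
qed

lemma biconnected_split_piece:
  assumes bc: "biconnected H"
  shows "biconnected (split_piece H u v F n)"
proof -
  let ?P = "split_piece H u v F n"
  have project: "reach ?P (edges ?P) (verts ?P - W) x y"
    if "x \<in> verts ?P" "y \<in> verts ?P" "reach H (edges H) (verts H - W) x y" for x y W
    using reach_project_split_piece_inside[OF that(3,1,2)]
      by (rule reach_mono) (auto simp: split_piece_simps)
  have "connected_graph ?P" unfolding connected_graph_iff_reach
  proof (intro ballI)
    fix x y assume xy: "x \<in> verts ?P" "y \<in> verts ?P"
    then have "reach H (edges H) (verts H - {}) x y"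
      using bc split_piece_verts_subset unfolding biconnected_iff_reach connected_graph_iff_reach
      by (simp add: subset_iff)
    then show "reach ?P (edges ?P) (verts ?P) x y" using project[OF xy, of "{}"] by simp
  qed
  moreover have "reach ?P (edges ?P) (verts ?P - {w}) x y"
    if "x \<in> verts ?P" "y \<in> verts ?P" "w \<in> verts ?P" "x \<noteq> y \<and> x \<noteq> w \<and> y \<noteq> w" for x y w
    using bc that split_piece_verts_subset unfolding biconnected_iff_reach
    by (intro project[OF that(1,2)]) auto
  ultimately show ?thesis unfolding biconnected_iff_reach by blast
qed

lemma split_piece_edge:
  assumes "g \<in> F"
  shows "g \<in> edges (split_piece H u v F n)" "ends (split_piece H u v F n) g = ends H g"
  using assms fresh sep_split_setD(4)[OF sep] by (auto simp: split_piece_simps)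

lemma cut_pair_lift_split_piece:
  assumes cp: "cut_pair (split_piece H u v F n) g c" and g: "g \<noteq> Inr n"
  shows "cut_pair H g c"
proof -
  let ?P = "split_piece H u v F n"
  have "g \<in> edges ?P" using cp unfolding cut_pair_def by blast
  then have gF: "g \<in> F" using g by (simp add: split_piece_simps)
  note gP = split_piece_edge[OF gF]
  have gE: "g \<in> edges H" using gF sep_split_setD(4)[OF sep] by blast
  obtain x y where xy: "ends H g = {x, y}" using wf_graph_endsE[OF wf gE] by blast
  note c = cut_pairD[OF cp gP(2)[unfolded xy]]
  have xyP: "x \<in> verts ?P" "y \<in> verts ?P" using gF xy by (auto simp: split_piece_simps)
  have "\<not> reach H (edges H - {g}) (verts H - {c}) x y"
  proof
    assume "reach H (edges H - {g}) (verts H - {c}) x y"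
    from reach_project_split_piece_inside[OF this xyP]
    have "reach ?P (edges ?P - {g}) (verts ?P - {c}) x y"
      by (rule reach_mono) (use g in \<open>auto simp: split_piece_simps\<close>)
    then show False using c(4) by simp
  qed
  moreover have "c \<in> verts H" using c(2) split_piece_verts_subset by blast
  ultimately show ?thesis using cut_pairI[OF gE xy] c(3) by blast
qed

lemma cut_pair_split_piece:
  assumes bc: "biconnected H" and cp: "cut_pair H g c" and gF: "g \<in> F"
  shows "\<exists>c'. cut_pair (split_piece H u v F n) g c'"
proof -
  let ?P = "split_piece H u v F n" and ?K = "edges H - F"
  note sepD = sep_split_setD[OF sep]
  have gE: "g \<in> edges H" using gF sepD(4) by blast
  obtain x y where xy: "ends H g = {x, y}" using wf_graph_endsE[OF wf gE] by blast
  note c = cut_pairD[OF cp xy]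
  note gP = split_piece_edge[OF gF]
  have uvP: "u \<in> verts ?P" "v \<in> verts ?P" by (auto simp: split_piece_simps)
  have lift: "reach H (edges H - {g}) (verts H - {c}) x y"
    if "reach ?P (edges ?P - {g}) (verts ?P - {c'}) x y" "verts ?P - {c'} \<subseteq> verts H - {c}"
      "u \<in> verts ?P - {c'} \<Longrightarrow> v \<in> verts ?P - {c'} \<Longrightarrow> reach H (edges H - {g}) (verts H - {c}) u v"
    for c'
    using that sepD(4) by (intro reach_lift_split_piece[OF that(1)]) auto
  have piece_cut: "cut_pair ?P g c'"
    if "c' \<in> verts ?P" "c' \<notin> {x, y}" "verts ?P - {c'} \<subseteq> verts H - {c}"
      "u \<in> verts ?P - {c'} \<Longrightarrow> v \<in> verts ?P - {c'} \<Longrightarrow> reach H (edges H - {g}) (verts H - {c}) u v"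
    for c'
    using lift[of c'] that c(4) gP xy by (intro cut_pairI[of g ?P x y]) auto
  show ?thesis
  proof (cases "c \<in> verts ?P")
    case True
    \<comment> \<open>keep c; the virtual edge is realised through the other side, which misses c\<close>
    obtain k where k: "k \<in> ?K" using sep_split_set_nonempty[OF sep] by blast
    have "reach H (edges H - {g}) (verts H - {c}) u v" if "u \<in> verts ?P - {c}" "v \<in> verts ?P - {c}"
    proof -
      have "c \<notin> \<Union>(ends H ` ?K)"
        using split_piece_common_vertex[OF _ _ _ True] that by blast
      moreover have "\<Union>(ends H ` ?K) \<subseteq> verts H" using wf by (auto simp: wf_graph_def)
      moreover note sep_split_set_connects_poles[OF wf bc sep_split_set_complement[OF sep] k]
      ultimately show ?thesis
        by (elim reach_mono) (use k gF in blast)+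
    qed
    moreover have "verts ?P - {c} \<subseteq> verts H - {c}" using split_piece_verts_subset by blast
    ultimately have "cut_pair ?P g c" using piece_cut[of c] True c(3) by simp
    then show ?thesis ..
  next
    case False
    show ?thesis
    proof (cases "{x, y} = {u, v}")
      case True
      \<comment> \<open>then g is parallel to the virtual edge, and u, v are joined on g's side avoiding c\<close>
      obtain f where f: "f \<in> F" "f \<noteq> g"
      proof -
        have "F \<noteq> {g}" using sepD(5) by auto
        then show ?thesis using that gF by blast
      qed
      have "reach H ({h \<in> F. ends H h \<noteq> {u, v}} \<union> {f}) (\<Union>(ends H ` F)) u v"
        using sep_split_set_connects_poles[OF wf bc sep f(1)] .
      then have "reach H (edges H - {g}) (verts H - {c}) u v"
        by (rule reach_mono) (use f xy True False sepD(4) in \<open>auto simp: split_piece_simps\<close>)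
      then have "reach H (edges H - {g}) (verts H - {c}) x y"
        using True reach_sym by (auto simp: doubleton_eq_iff)
      then show ?thesis using c(4) by simp
    next
      case False2: False
      \<comment> \<open>otherwise one of u, v is not an end of g and cuts it off in the piece\<close>
      then obtain c' where c': "c' \<in> {u, v}" "c' \<notin> {x, y}" using sepD(3) by auto
      moreover have "verts ?P - {c'} \<subseteq> verts H - {c}"
        using split_piece_verts_subset False by blast
      ultimately have "cut_pair ?P g c'" using piece_cut[of c'] uvP by auto
      then show ?thesis ..
    qed
  qed
qed

end

section \<open>Triconnected graphs with a cut pair\<close>

lemma biconnected_two_edges_at:
  assumes wf: "wf_graph H" and bc: "biconnected H" and V: "w \<in> verts H" "a \<in> verts H" "b \<in> verts H"
    and d: "w \<noteq> a" "w \<noteq> b" "a \<noteq> b"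
  obtains h1 h2 where "h1 \<in> edges H" "h2 \<in> edges H" "h1 \<noteq> h2" "w \<in> ends H h1" "w \<in> ends H h2"
proof -
  have "reach H (edges H) (verts H - {a}) w b" using bc V d unfolding biconnected_iff_reach by auto
  from reach_first_edge[OF this] d obtain h1 z1 where h1: "h1 \<in> edges H" "ends H h1 = {w, z1}"
    "z1 \<in> verts H - {a}"
    by auto
  have wz1: "w \<noteq> z1" using wf_graph_ends(2)[OF wf h1(1)] h1(2) card_doubleton_neq by metis
  have "reach H (edges H) (verts H - {z1}) w a"
    using bc V d h1(3) wz1 unfolding biconnected_iff_reach by auto
  from reach_first_edge[OF this] d obtain h2 z2 where h2: "h2 \<in> edges H" "ends H h2 = {w, z2}"
    "z2 \<in> verts H - {z1}"
    by auto
  have wz2: "w \<noteq> z2" using wf_graph_ends(2)[OF wf h2(1)] h2(2) card_doubleton_neq by metis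
  have "h1 \<noteq> h2" using h1(2) h2(2,3) wz2 by auto
  then show ?thesis using that h1 h2 by blast
qed

lemma biconnected_edge_at_besides:
  assumes "wf_graph H" "biconnected H" "w \<in> verts H" "a \<in> verts H" "b \<in> verts H"
    "w \<noteq> a" "w \<noteq> b" "a \<noteq> b"
  obtains h where "h \<in> edges H" "h \<noteq> g" "w \<in> ends H h"
proof (rule biconnected_two_edges_at[OF assms])
  fix h1 h2 assume "h1 \<in> edges H" "h2 \<in> edges H" "h1 \<noteq> h2" "w \<in> ends H h1" "w \<in> ends H h2"
  then show thesis using that by (cases "h1 = g") auto
qed

lemma triconnected_sep_closed_subsingleton:
  assumes wf: "wf_graph H" and nsp: "\<not> has_sep_pair H"
    and uv: "u \<in> verts H" "v \<in> verts H" "u \<noteq> v"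
    and F: "F \<subseteq> edges H" "\<forall>e\<in>F. \<forall>f\<in>edges H. same_sep_class H u v e f \<longrightarrow> f \<in> F"
    and g: "g1 \<in> edges H - F" "g2 \<in> edges H - F" "g1 \<noteq> g2"
    and ab: "a \<in> F" "b \<in> F"
  shows "a = b"
proof (rule ccontr)
  assume "a \<noteq> b"
  have fin: "finite (edges H)" using wf by (simp add: wf_graph_def)
  then have "card {a, b} \<le> card F" using ab F(1) finite_subset by (intro card_mono) auto
  moreover have "card {g1, g2} \<le> card (edges H - F)" using g fin by (intro card_mono) auto
  ultimately have "sep_split_set H u v F"
    using uv F \<open>a \<noteq> b\<close> g(3) unfolding sep_split_set_def by auto
  then show False using nsp unfolding has_sep_pair_def by blast
qed

lemma triconnected_cut_pair_end:
  assumes wf: "wf_graph H" and bc: "biconnected H" and nsp: "\<not> has_sep_pair H"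
    and g: "g \<in> edges H" "ends H g = {x, y}" and c: "c \<in> verts H" "c \<notin> {x, y}"
    and nr: "\<not> reach H (edges H - {g}) (verts H - {c}) x y"
  obtains h where "h \<in> edges H" "ends H h = {x, c}" "\<forall>h'\<in>edges H. x \<in> ends H h' \<longrightarrow> h' = g \<or> h' = h"
proof -
  \<comment> \<open>The edges at the part X' of H - g - c reachable from x, without x itself, together with the
    edges joining c and x form a union of separation classes w.r.t. {c, x}. Its complement contains
    g and a second edge at y, so by triconnectivity it has at most one edge; hence X' is empty.\<close>
  let ?E = "edges H - {g}" and ?A = "verts H - {c}"
  define X where "X = {z. reach H ?E ?A x z}"
  define X' where "X' = X - {x}"
  define F where "F = {h \<in> edges H. ends H h \<inter> X' \<noteq> {} \<or> ends H h = {c, x}}"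
  have xy: "x \<noteq> y" using wf_graph_ends(2)[OF wf g(1)] g(2) card_doubleton_neq by metis
  have xyV: "x \<in> verts H" "y \<in> verts H" using wf_graph_ends(1)[OF wf g(1)] g(2) by auto
  have xX: "x \<in> X" using xyV c(2) by (auto simp: X_def intro: reach_refl)
  have yX: "y \<notin> X" using nr by (simp add: X_def)
  have X'V: "z \<in> verts H" "z \<noteq> c" if "z \<in> X'" for z
    using that reachD by (fastforce simp: X'_def X_def)+
  have ext: "z \<in> X" if "w \<in> X" "h \<in> edges H" "h \<noteq> g" "ends H h = {w, z}" "z \<noteq> c" for w h z
  proof -
    have "z \<in> verts H" using wf_graph_ends(1)[OF wf that(2)] that(4) by auto
    have "reach H ?E ?A x w" using that(1) by (simp add: X_def)
    then have "reach H ?E ?A x z" by (rule reach_step[where f = h]) (use that \<open>z \<in> verts H\<close> in auto)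
    then show ?thesis by (simp add: X_def)
  qed
  have edge_at_x: "h' \<in> F \<and> (ends H h' = {x, c} \<or> (\<exists>z\<in>X'. ends H h' = {x, z}))"
    if h': "h' \<in> edges H" "h' \<noteq> g" "x \<in> ends H h'" for h'
  proof -
    obtain z where z: "ends H h' = {x, z}" "z \<noteq> x" using wf_graph_other_end[OF wf h'(1,3)] by blast
    show ?thesis
    proof (cases "z = c")
      case False
      then have "z \<in> X'" using ext[OF xX h'(1,2) z(1)] z(2) by (simp add: X'_def)
      then show ?thesis using z h'(1) by (auto simp: F_def)
    qed (use z h'(1) in \<open>auto simp: F_def insert_commute\<close>)
  qed
  have closed: "\<forall>e\<in>F. \<forall>f\<in>edges H. same_sep_class H c x e f \<longrightarrow> f \<in> F"
  proof (rule sep_class_closed_vertex_set[OF wf _ F_def])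
    fix h w z assume h: "h \<in> edges H" "ends H h = {w, z}" "w \<in> X'"
    then have "h \<noteq> g" using g(2) yX by (auto simp: X'_def doubleton_eq_iff)
    then show "z \<in> X' \<union> {c, x}" using ext[of w h z] h by (auto simp: X'_def)
  qed
  have FE: "F \<subseteq> edges H" by (auto simp: F_def)
  have gF: "g \<notin> F" using g(2) c(2) yX by (auto simp: F_def X'_def doubleton_eq_iff)
  have cx: "y \<noteq> x" "y \<noteq> c" "x \<noteq> c" using xy c(2) by auto
  obtain hy where hy: "hy \<in> edges H" "hy \<noteq> g" "y \<in> ends H hy"
    using biconnected_edge_at_besides[OF wf bc xyV(2,1) c(1) cx] .
  have "hy \<notin> F"
  proof
    assume "hy \<in> F"
    obtain z where z: "ends H hy = {y, z}" using wf_graph_other_end[OF wf hy(1,3)] by blast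
    have "ends H hy \<noteq> {c, x}" using hy(3) c(2) xy by auto
    then have "z \<in> X'" using \<open>hy \<in> F\<close> z yX by (auto simp: F_def X'_def)
    then have "y \<in> X" using ext[of z hy y] z hy c(2) by (auto simp: X'_def insert_commute)
    then show False using yX by simp
  qed
  then have F1: "a = b" if "a \<in> F" "b \<in> F" for a b
    using triconnected_sep_closed_subsingleton[OF wf nsp c(1) xyV(1) cx(3)[symmetric] FE closed
        _ _ _ that]
      g(1) gF hy(1,2) by blast
  have "X' = {}"
  proof (rule ccontr)
    assume "X' \<noteq> {}"
    then obtain w where w: "w \<in> X'" by auto
    have "w \<noteq> x" "w \<noteq> c" using w X'V[OF w] by (auto simp: X'_def)
    then obtain h1 h2 where "h1 \<in> edges H" "h2 \<in> edges H" "h1 \<noteq> h2"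
      "w \<in> ends H h1" "w \<in> ends H h2"
      using biconnected_two_edges_at[OF wf bc X'V(1)[OF w] xyV(1) c(1)] cx(3) by blast
    then show False using F1 w by (auto simp: F_def)
  qed
  obtain hx where hx: "hx \<in> edges H" "hx \<noteq> g" "x \<in> ends H hx"
    using biconnected_edge_at_besides[OF wf bc xyV(1,2) c(1) xy cx(3) cx(2)] .
  have "ends H hx = {x, c}" using edge_at_x[OF hx] \<open>X' = {}\<close> by auto
  moreover have "h' = g \<or> h' = hx" if "h' \<in> edges H" "x \<in> ends H h'" for h'
    using edge_at_x[OF that(1) _ that(2)] edge_at_x[OF hx] F1 by blast
  ultimately show ?thesis using that hx(1) by blast
qed

lemma triconnected_cut_pair_is_cycle:
  assumes wf: "wf_graph H" and bc: "biconnected H" and nsp: "\<not> has_sep_pair H"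
    and cp: "cut_pair H g c"
  shows "is_cycle H"
proof -
  have gE: "g \<in> edges H" using cp by (simp add: cut_pair_def)
  obtain x y where g: "ends H g = {x, y}" and xy: "x \<noteq> y" and xyV: "x \<in> verts H" "y \<in> verts H"
    using wf_graph_endsE[OF wf gE] by blast
  note cpD = cut_pairD[OF cp g]
  obtain hx where hx: "hx \<in> edges H" "ends H hx = {x, c}"
    "\<forall>h'\<in>edges H. x \<in> ends H h' \<longrightarrow> h' = g \<or> h' = hx"
    using triconnected_cut_pair_end[OF wf bc nsp gE g cpD(2,3,4)] by blast
  have "ends H g = {y, x}" "c \<notin> {y, x}" "\<not> reach H (edges H - {g}) (verts H - {c}) y x"
    using g cpD(3) reach_sym[of H "edges H - {g}" "verts H - {c}" y x] cpD(4)
    by (auto simp: insert_commute)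
  then obtain hy where hy: "hy \<in> edges H" "ends H hy = {y, c}"
    "\<forall>h'\<in>edges H. y \<in> ends H h' \<longrightarrow> h' = g \<or> h' = hy"
    using triconnected_cut_pair_end[OF wf bc nsp gE _ cpD(2)] by blast
  have cxy: "c \<noteq> x" "c \<noteq> y" using cpD(3) by auto
  \<comment> \<open>x and y have degree two, so every vertex other than c is x or y\<close>
  have V: "verts H = {x, y, c}"
  proof (rule ccontr)
    assume "verts H \<noteq> {x, y, c}"
    then obtain z where z: "z \<in> verts H" "z \<notin> {x, y, c}" using xyV cpD(2) by auto
    have "reach H (edges H) (verts H - {c}) x z"
      using bc z xyV cpD(2) cxy unfolding biconnected_iff_reach by auto
    then have "z \<in> {x, y}"
    proof (rule reach_closed)
      fix s f q assume h: "s \<in> {x, y}" "f \<in> edges H" "f \<in> edges H" "ends H f = {s, q}"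
        "q \<in> verts H - {c}" "q \<in> verts H"
      then have "(s = x \<and> (f = g \<or> f = hx)) \<or> (s = y \<and> (f = g \<or> f = hy))" using hx(3) hy(3) by auto
      then show "q \<in> {x, y}" using h g hx(2) hy(2) by (auto simp: doubleton_eq_iff)
    qed simp
    then show False using z by auto
  qed
  have E: "edges H = {g, hy, hx}"
  proof
    show "edges H \<subseteq> {g, hy, hx}"
    proof
      fix h' assume h': "h' \<in> edges H"
      have "ends H h' \<subseteq> {x, y, c}" "card (ends H h') = 2" using wf_graph_ends[OF wf h'] V by auto
      moreover have "\<not> ends H h' \<subseteq> {c}"
        using card_mono[of "{c}" "ends H h'"] \<open>card (ends H h') = 2\<close> by auto
      ultimately have "x \<in> ends H h' \<or> y \<in> ends H h'" by blast
      then show "h' \<in> {g, hy, hx}" using hx(3) hy(3) h' by auto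
    qed
  qed (use gE hx hy in auto)
  have "hy \<noteq> g" "hx \<noteq> g" "hx \<noteq> hy" using hx(2) hy(2) g cxy xy by (auto simp: doubleton_eq_iff)
  then have "closed_path H [x, y, c, x] [g, hy, hx]"
    unfolding closed_path_def is_walk_def
    using gE hx hy g xyV cpD(2) xy cxy by (auto simp: less_Suc_eq insert_commute)
  then show ?thesis unfolding is_cycle_def
    by (intro exI[of _ "[x, y, c, x]"] exI[of _ "[g, hy, hx]"]) (use V E in auto)
qed

section \<open>Cycles\<close>

lemma closed_path_rotate1:
  assumes cp: "closed_path H vs es"
  shows "closed_path H (tl vs @ [vs ! 1]) (tl es @ [hd es]) \<and> set (tl vs @ [vs ! 1]) = set vs
         \<and> set (tl es @ [hd es]) = set es"
proof -
  have w: "is_walk H vs es" and l2: "length es \<ge> 2" and hl: "hd vs = last vs"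
    and dt: "distinct (tl vs)"
    and de: "distinct es" using cp by (auto simp: closed_path_def)
  have l: "length vs = Suc (length es)" using w by (simp add: is_walk_def)
  obtain v0 ws where vs: "vs = v0 # ws" using l by (cases vs) auto
  obtain e0 es' where es: "es = e0 # es'" using l2 by (cases es) auto
  have lws: "length ws = length es" using l vs by simp
  have wsne: "ws \<noteq> []" using lws l2 by auto
  have v0: "v0 = last ws" using hl vs wsne by simp
  have v1: "vs ! 1 = ws ! 0" using vs by simp
  have ends_i: "ends H (es ! i) = {vs ! i, vs ! Suc i}" if "i < length es" for i
    using w that by (simp add: is_walk_def)
  have w': "is_walk H (ws @ [ws ! 0]) (es' @ [e0])"
    unfolding is_walk_def
  proof (intro conjI allI impI)
    show "length (ws @ [ws ! 0]) = Suc (length (es' @ [e0]))" using lws es by simp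
    have "ws ! 0 \<in> set ws" using wsne by simp
    then show "set (ws @ [ws ! 0]) \<subseteq> verts H" using w vs by (auto simp: is_walk_def)
    show "set (es' @ [e0]) \<subseteq> edges H" using w es by (auto simp: is_walk_def)
    fix i assume i: "i < length (es' @ [e0])"
    show "ends H ((es' @ [e0]) ! i) = {(ws @ [ws ! 0]) ! i, (ws @ [ws ! 0]) ! Suc i}"
    proof (cases "i < length es'")
      case True
      have "ends H (es ! Suc i) = {vs ! Suc i, vs ! Suc (Suc i)}"
        using ends_i[of "Suc i"] True es by simp
      then show ?thesis using True es vs lws by (simp add: nth_append)
    next
      case False
      then have ii: "i = length es'" using i by simp
      have "ends H (es ! 0) = {vs ! 0, vs ! 1}" using ends_i[of 0] l2 by fastforce
      moreover have "(ws @ [ws ! 0]) ! i = v0"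
        using ii lws es v0 wsne by (simp add: nth_append last_conv_nth)
      moreover have "(ws @ [ws ! 0]) ! Suc i = ws ! 0" using ii lws es by (simp add: nth_append)
      ultimately show ?thesis using ii es vs by (simp add: nth_append)
    qed
  qed
  have dws: "distinct ws" using dt vs by simp
  have d': "distinct (tl (ws @ [ws ! 0]))"
  proof -
    obtain w0 ws' where "ws = w0 # ws'" using wsne by (cases ws) auto
    then show ?thesis using dws by simp
  qed
  have cp': "closed_path H (ws @ [ws ! 0]) (es' @ [e0])"
    unfolding closed_path_def using w' d' de es l2 wsne by (auto simp: hd_append hd_conv_nth)
  have s1: "set (ws @ [ws ! 0]) = set vs" using vs v0 wsne by auto
  have s2: "set (es' @ [e0]) = set es" using es by auto
  show ?thesis using cp' s1 s2 vs es v1 by simp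
qed

lemma closed_path_rotate:
  assumes cp: "closed_path H vs es"
  shows "\<exists>vs'. closed_path H vs' (rotate j es) \<and> set vs' = set vs"
proof (induction j)
  case 0 then show ?case using cp by auto
next
  case (Suc j)
  then obtain vs' where vs': "closed_path H vs' (rotate j es)" "set vs' = set vs" by blast
  have ne: "rotate j es \<noteq> []" using vs' by (auto simp: closed_path_def)
  have "rotate (Suc j) es = tl (rotate j es) @ [hd (rotate j es)]"
    by (simp only: rotate_Suc rotate1_hd_tl[OF ne])
  then show ?case using closed_path_rotate1[OF vs'(1)] vs'(2) by metis
qed

lemma cycle_closed_path_ending_at:
  assumes "is_cycle H" "h \<in> edges H"
  shows "\<exists>vs es. closed_path H vs es \<and> set vs = verts H \<and> set es = edges H \<and>
    length es \<ge> 3 \<and> last es = h"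
proof -
  obtain vs es where c: "closed_path H vs es" "set vs = verts H" "set es = edges H" "length es \<ge> 3"
    using assms(1) by (auto simp: is_cycle_def)
  obtain i where i: "i < length es" "es ! i = h" using c(3) assms(2) by (metis in_set_conv_nth)
  obtain vs' where vs': "closed_path H vs' (rotate (Suc i) es)" "set vs' = set vs"
    using closed_path_rotate[OF c(1)] by blast
  have "last (rotate (Suc i) es) = es ! i"
  proof -
    have ne: "rotate (Suc i) es \<noteq> []" using c(4) by auto
    have "last (rotate (Suc i) es) = rotate (Suc i) es ! (length es - 1)"
      using ne by (simp add: last_conv_nth)
    also have "\<dots> = es ! ((Suc i + (length es - 1)) mod length es)"
      using c(4) by (intro nth_rotate) simp
    also have "(Suc i + (length es - 1)) mod length es = i"
    proof -
      have "Suc i + (length es - 1) = i + length es" using i(1) by simp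
      then show ?thesis using i(1) by simp
    qed
    finally show ?thesis .
  qed
  then show ?thesis using vs' c i by (intro exI[of _ vs'] exI[of _ "rotate (Suc i) es"]) auto
qed

lemma last_not_in_set_butlast: "distinct xs \<Longrightarrow> xs \<noteq> [] \<Longrightarrow> last xs \<notin> set (butlast xs)"
proof -
  assume "distinct xs" "xs \<noteq> []"
  then have "distinct (butlast xs @ [last xs])" by simp
  then show ?thesis by simp
qed

lemma set_butlast_last: "xs \<noteq> [] \<Longrightarrow> set xs = insert (last xs) (set (butlast xs))"
proof -
  assume "xs \<noteq> []"
  then have "set xs = set (butlast xs @ [last xs])" by simp
  then show ?thesis by auto
qed

lemma closed_path_butlast:
  assumes cp: "closed_path H vs es"
  shows "open_path H (butlast vs) (butlast es)" "ends H (last es) = {last (butlast vs), hd vs}"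
    "hd (butlast vs) = hd vs" "set (butlast vs) = set vs"
      "set es = insert (last es) (set (butlast es))"
    "last es \<notin> set (butlast es)" "distinct (butlast es)"
proof -
  have w: "is_walk H vs es" and l2: "length es \<ge> 2" and hl: "hd vs = last vs"
    and dt: "distinct (tl vs)"
    and de: "distinct es" using cp by (auto simp: closed_path_def)
  have l: "length vs = Suc (length es)" using w by (simp add: is_walk_def)
  obtain v0 ws where vs: "vs = v0 # ws" using l by (cases vs) auto
  have lws: "length ws = length es" using l vs by simp
  have wsne: "ws \<noteq> []" using lws l2 by auto
  have v0: "v0 = last ws" using hl vs wsne by simp
  have bv: "butlast vs = v0 # butlast ws" using vs wsne by simp
  have dws: "distinct ws" using dt vs by simp
  have "distinct (butlast ws)" "last ws \<notin> set (butlast ws)"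
    using dws wsne by (simp_all add: distinct_butlast last_not_in_set_butlast)
  then have "distinct (butlast vs)" using bv v0 by simp
  moreover have "is_walk H (butlast vs) (butlast es)"
  proof -
    have "is_walk H (take (Suc (length es - 1)) vs) (take (length es - 1) es)"
      using walk_take[OF w, of "length es - 1"] by simp
    moreover have "Suc (length es - 1) = length es" using l2 by simp
    moreover have "take (length es) vs = butlast vs" using l by (simp add: butlast_conv_take)
    moreover have "take (length es - 1) es = butlast es" by (simp add: butlast_conv_take)
    ultimately show ?thesis by simp
  qed
  ultimately show "open_path H (butlast vs) (butlast es)" by (simp add: open_path_def)
  have ne: "es \<noteq> []" using l2 by auto
  have "ends H (last es) = {vs ! (length es - 1), vs ! length es}"
    using w ne by (simp add: is_walk_def last_conv_nth)
  moreover have "vs ! length es = hd vs"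
  proof -
    have "vs ! length es = last vs" using l by (subst last_conv_nth) auto
    then show ?thesis using hl by simp
  qed
  moreover have "vs ! (length es - 1) = last (butlast vs)"
  proof -
    have "butlast vs \<noteq> []" using l ne by (cases vs) auto
    then have "last (butlast vs) = butlast vs ! (length (butlast vs) - 1)"
      by (simp add: last_conv_nth)
    also have "\<dots> = vs ! (length es - 1)" using l ne by (simp add: nth_butlast)
    finally show ?thesis by simp
  qed
  ultimately show "ends H (last es) = {last (butlast vs), hd vs}" by simp
  show "hd (butlast vs) = hd vs" using bv vs by simp
  show "set (butlast vs) = set vs" using bv vs v0 wsne set_butlast_last[of ws] by auto
  show "set es = insert (last es) (set (butlast es))" using ne by (rule set_butlast_last)
  show "last es \<notin> set (butlast es)" "distinct (butlast es)"
    using de ne by (simp_all add: distinct_butlast last_not_in_set_butlast)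
qed

lemma is_walk_rev:
  assumes w: "is_walk H vs es"
  shows "is_walk H (rev vs) (rev es)"
  unfolding is_walk_def
proof (intro conjI allI impI)
  have l: "length vs = Suc (length es)" using w by (simp add: is_walk_def)
  show "length (rev vs) = Suc (length (rev es))" using l by simp
  show "set (rev vs) \<subseteq> verts H" "set (rev es) \<subseteq> edges H" using w by (auto simp: is_walk_def)
  fix i assume i: "i < length (rev es)"
  let ?j = "length es - Suc i"
  have j: "?j < length es" using i by simp
  have "rev es ! i = es ! ?j" using i by (simp add: rev_nth)
  moreover have "rev vs ! i = vs ! Suc ?j" using i l by (simp add: rev_nth Suc_diff_Suc)
  moreover have "rev vs ! Suc i = vs ! ?j" using i l by (simp add: rev_nth)
  ultimately show "ends H (rev es ! i) = {rev vs ! i, rev vs ! Suc i}"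
    using w j by (auto simp: is_walk_def)
qed

lemma is_walk_append:
  assumes w1: "is_walk H p q" and w2: "is_walk H p' q'" and pp: "last p = hd p'"
  shows "is_walk H (butlast p @ p') (q @ q')"
  unfolding is_walk_def
proof (intro conjI allI impI)
  have l1: "length p = Suc (length q)" and l2: "length p' = Suc (length q')"
    using w1 w2 by (auto simp: is_walk_def)
  have lb: "length (butlast p) = length q" using l1 by simp
  show "length (butlast p @ p') = Suc (length (q @ q'))" using lb l2 by simp
  show "set (butlast p @ p') \<subseteq> verts H"
    using w1 w2 by (auto simp: is_walk_def dest: in_set_butlastD)
  show "set (q @ q') \<subseteq> edges H" using w1 w2 by (auto simp: is_walk_def)
  fix i assume i: "i < length (q @ q')"
  show "ends H ((q @ q') ! i) = {(butlast p @ p') ! i, (butlast p @ p') ! Suc i}"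
  proof (cases "i < length q")
    case True
    have a: "(butlast p @ p') ! i = p ! i" using True lb by (simp add: nth_append nth_butlast)
    have b: "(butlast p @ p') ! Suc i = p ! Suc i"
    proof (cases "Suc i < length q")
      case True then show ?thesis using lb by (simp add: nth_append nth_butlast)
    next
      case False
      then have si: "Suc i = length q" using \<open>i < length q\<close> by simp
      have "p ! Suc i = last p" using si l1 by (subst last_conv_nth) auto
      moreover have "(butlast p @ p') ! Suc i = hd p'"
        using si lb l2 by (cases p') (auto simp: nth_append)
      ultimately show ?thesis using pp by simp
    qed
    show ?thesis using True a b w1 by (simp add: nth_append is_walk_def)
  next
    case False
    then show ?thesis using w2 i lb by (simp add: nth_append is_walk_def Suc_diff_le)
  qed
qed

lemma is_walk_transfer:
  assumes "is_walk H vs es" "set vs \<subseteq> verts H'" "set es \<subseteq> edges H'"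
      "\<forall>e\<in>set es. ends H' e = ends H e"
  shows "is_walk H' vs es"
  using assms unfolding is_walk_def by auto

lemma closed_path_nth:
  assumes cp: "closed_path H vs es"
  shows "vs ! 0 = vs ! length es"
    "\<And>i j. 0 < i \<Longrightarrow> i \<le> length es \<Longrightarrow> 0 < j \<Longrightarrow> j \<le> length es \<Longrightarrow> vs ! i = vs ! j \<longleftrightarrow> i = j"
proof -
  have w: "is_walk H vs es" and hl: "hd vs = last vs" and dt: "distinct (tl vs)"
    using cp by (auto simp: closed_path_def)
  have l: "length vs = Suc (length es)" using w by (simp add: is_walk_def)
  have ne: "vs \<noteq> []" using l by auto
  show "vs ! 0 = vs ! length es" using hl ne l by (simp add: hd_conv_nth last_conv_nth)
  fix i j assume ij: "0 < i" "i \<le> length es" "0 < j" "j \<le> length es"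
  have "vs ! i = tl vs ! (i - 1)" "vs ! j = tl vs ! (j - 1)" using ij l by (simp_all add: nth_tl)
  moreover have "length (tl vs) = length es" using l by simp
  ultimately show "vs ! i = vs ! j \<longleftrightarrow> i = j"
    using dt ij nth_eq_iff_index_eq[OF dt, of "i - 1" "j - 1"] by auto
qed

lemma cycle_open_path_around_edge:
  assumes "is_cycle A" "h \<in> edges A"
  shows "\<exists>p q. open_path A p q \<and> set p = verts A \<and> set q = edges A - {h} \<and> distinct q \<and>
    ends A h = {last p, hd p} \<and> length q \<ge> 2"
proof -
  obtain vs es where c: "closed_path A vs es" "set vs = verts A" "set es = edges A" "length es \<ge> 3"
    "last es = h"
    using cycle_closed_path_ending_at[OF assms] by blast
  note co = closed_path_butlast[OF c(1)]
  have "set (butlast es) = edges A - {h}" using co(5,6) c(3,5) by auto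
  moreover have "length (butlast es) \<ge> 2" using c(4) by simp
  ultimately show ?thesis using co c by (intro exI[of _ "butlast vs"] exI[of _ "butlast es"]) auto
qed

lemma open_path_rev: "open_path H p q \<Longrightarrow> open_path H (rev p) (rev q)"
  by (simp add: open_path_def is_walk_rev)

lemma cycle_open_path_from_to:
  assumes "is_cycle A" "h \<in> edges A" "ends A h = {a, b}"
  obtains p q where "open_path A p q" "hd p = a" "last p = b" "set p = verts A"
    "set q = edges A - {h}" "distinct q" "length q \<ge> 2"
proof -
  obtain p q where p: "open_path A p q" "set p = verts A" "set q = edges A - {h}" "distinct q"
    "ends A h = {last p, hd p}" "length q \<ge> 2"
    using cycle_open_path_around_edge[OF assms(1,2)] by blast
  have ne: "p \<noteq> []" using p(1) by (auto simp: open_path_def is_walk_def)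
  have "length p \<ge> 3" using p(1,6) by (simp add: open_path_def is_walk_def)
  then have "hd p \<noteq> last p"
    using p(1) ne by (cases p) (auto simp: open_path_def)
  then consider "hd p = a" "last p = b" | "hd p = b" "last p = a"
    using p(5) assms(3) by (auto simp: doubleton_eq_iff)
  then show ?thesis
  proof cases
    case 1
    then show ?thesis using that p by blast
  next
    case 2
    then have "hd (rev p) = a" "last (rev p) = b" using ne by (simp_all add: hd_rev last_rev)
    then show ?thesis using that[OF open_path_rev[OF p(1)]] p by simp
  qed
qed

lemma is_cycle_merge_graphs:
  assumes cA: "is_cycle A" and cB: "is_cycle B" and nA: "Inr n \<in> edges A" and nB: "Inr n \<in> edges B"
    and EE: "edges A \<inter> edges B = {Inr n}" and VV: "verts A \<inter> verts B \<subseteq> ends A (Inr n)"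
    and en: "ends A (Inr n) = ends B (Inr n)"
  shows "is_cycle (merge_graphs A B n)"
proof -
  let ?M = "merge_graphs A B n"
  have Mv: "verts ?M = verts A \<union> verts B" and Me: "edges ?M = (edges A \<union> edges B) - {Inr n}"
    and Mends: "ends ?M = (\<lambda>e. if e \<in> edges A then ends A e else ends B e)"
        by (simp_all add: merge_graphs_def)
  obtain pa qa where pa: "open_path A pa qa" "set pa = verts A" "set qa = edges A - {Inr n}"
    "distinct qa"
    "ends A (Inr n) = {last pa, hd pa}" "length qa \<ge> 2"
    using cycle_open_path_around_edge[OF cA nA] by blast
  have lpa: "length pa = Suc (length qa)" using pa(1) by (simp add: open_path_def is_walk_def)
  obtain a0 mid a1 where pa_eq: "pa = a0 # mid @ [a1]"
  proof -
    obtain a0 r where r: "pa = a0 # r" using lpa by (cases pa) auto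
    then have "r \<noteq> []" using lpa pa(6) by auto
    then have "r = butlast r @ [last r]" by simp
    then show ?thesis using that r by metis
  qed
  have dpa: "distinct pa" using pa(1) by (simp add: open_path_def)
  have a01: "a0 \<noteq> a1" "a0 \<notin> set mid" "a1 \<notin> set mid" using dpa pa_eq by auto
  have ends_n: "ends A (Inr n) = {a1, a0}" using pa(5) pa_eq by simp
  obtain pb' qb' where pb': "open_path B pb' qb'" "set pb' = verts B" "set qb' = edges B - {Inr n}"
    "distinct qb'" "hd pb' = a1" "last pb' = a0" "length qb' \<ge> 2"
    using cycle_open_path_from_to[OF cB nB] en ends_n by metis
  have wa: "is_walk ?M pa qa"
    by (rule is_walk_transfer[of A]) (use pa(1) pa(2,3) in \<open>auto simp: open_path_def Mv Me Mends\<close>)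
  have wb: "is_walk ?M pb' qb'"
  proof (rule is_walk_transfer[of B])
    show "is_walk B pb' qb'" using pb'(1) by (simp add: open_path_def)
    show "set pb' \<subseteq> verts ?M" using pb'(2) Mv by simp
    show "set qb' \<subseteq> edges ?M" using pb'(3) Me by auto
    show "\<forall>e\<in>set qb'. ends ?M e = ends B e" using pb'(3) EE Mends by auto
  qed
  have lpa1: "last pa = hd pb'" using pa_eq pb'(5) by simp
  define vs where "vs = butlast pa @ pb'"
  define es where "es = qa @ qb'"
  have w: "is_walk ?M vs es" unfolding vs_def es_def by (rule is_walk_append[OF wa wb lpa1])
  have bpa: "butlast pa = a0 # mid" using pa_eq by simp
  have pbne: "pb' \<noteq> []" using pb'(1) by (auto simp: open_path_def is_walk_def)
  have dpb: "distinct pb'" using pb'(1) by (simp add: open_path_def)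
  have disj: "set mid \<inter> set pb' = {}"
  proof (rule ccontr)
    assume "set mid \<inter> set pb' \<noteq> {}"
    then obtain z where z: "z \<in> set mid" "z \<in> set pb'" by auto
    then have "z \<in> verts A \<inter> verts B" using pa(2) pb'(2) pa_eq by auto
    then have "z \<in> {a1, a0}" using VV ends_n by auto
    then show False using z a01 by auto
  qed
  have cp: "closed_path ?M vs es"
    unfolding closed_path_def
  proof (intro conjI)
    show "is_walk ?M vs es" by (rule w)
    show "2 \<le> length es" using pa(6) by (simp add: es_def)
    show "hd vs = last vs" using bpa pbne pb'(6) by (simp add: vs_def)
    show "distinct (tl vs)" using bpa dpa pa_eq dpb disj by (auto simp: vs_def)
    show "distinct es" using pa(3,4) pb'(3,4) EE by (auto simp: es_def)
  qed
  have sv: "set vs = verts ?M"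
  proof -
    have "a1 \<in> verts B" using pb'(2,5) pbne by (metis hd_in_set)
    then show ?thesis using pa(2) pb'(2) pa_eq Mv by (auto simp: vs_def)
  qed
  have se: "set es = edges ?M" using pa(3) pb'(3) Me by (auto simp: es_def)
  have "length es \<ge> 3" using pa(6) pb'(7) by (simp add: es_def)
  then show ?thesis unfolding is_cycle_def using cp sv se by blast
qed

lemma merge_multiedges_not_cycle:
  assumes mA: "is_multiedge A" and mB: "is_multiedge B"
  shows "\<not> is_cycle (merge_graphs A B n)"
proof
  let ?M = "merge_graphs A B n"
  assume "is_cycle ?M"
  then obtain vs es where c: "closed_path ?M vs es" "set es = edges ?M" "length es \<ge> 3"
    by (auto simp: is_cycle_def)
  have w: "is_walk ?M vs es" using c(1) by (simp add: closed_path_def)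
  have esne: "es \<noteq> []" using c(3) by auto
  have all: "ends ?M e = verts A \<or> ends ?M e = verts B" if "e \<in> edges ?M" for e
    using that mA mB by (auto simp: merge_graphs_def is_multiedge_def)
  have e: "ends ?M (es ! i) = {vs ! i, vs ! Suc i}" "es ! i \<in> edges ?M" if "i < length es" for i
    using w that c(2) by (auto simp: is_walk_def)
  note ix = closed_path_nth[OF c(1)]
  let ?k = "length es"
  have d12: "vs ! 1 \<noteq> vs ! 2" "vs ! 1 \<noteq> vs ! 3" "vs ! 2 \<noteq> vs ! 3"
    using ix(2)[of 1 2] ix(2)[of 1 3] ix(2)[of 2 3] c(3) by auto
  have d0: "vs ! 0 \<noteq> vs ! 1 \<and> vs ! 0 \<noteq> vs ! 2"
  proof (cases "?k = 3")
    case True then show ?thesis using ix(1) d12 by simp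
  next
    case False
    have "vs ! ?k \<noteq> vs ! 1" using ix(2)[of ?k 1] c(3) esne by simp
    moreover have "vs ! ?k \<noteq> vs ! 2" using ix(2)[of ?k 2] c(3) False esne by simp
    ultimately show ?thesis using ix(1) by simp
  qed
  have s0: "ends ?M (es ! 0) = {vs ! 0, vs ! 1}" and s1: "ends ?M (es ! 1) = {vs ! 1, vs ! 2}"
    and s2: "ends ?M (es ! 2) = {vs ! 2, vs ! 3}"
        using e(1)[of 0] e(1)[of 1] e(1)[of 2] c(3) esne
        by (auto simp: numeral_2_eq_2 numeral_3_eq_3)
  have m0: "es ! 0 \<in> edges ?M" and m1: "es ! 1 \<in> edges ?M" and m2: "es ! 2 \<in> edges ?M"
    using e(2)[of 0] e(2)[of 1] e(2)[of 2] c(3) esne by auto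
  have n01: "{vs ! 0, vs ! 1} \<noteq> {vs ! 1, vs ! 2}" using d0 by (auto simp: doubleton_eq_iff)
  have n02: "{vs ! 0, vs ! 1} \<noteq> {vs ! 2, vs ! 3}" using d12 by (auto simp: doubleton_eq_iff)
  have n12: "{vs ! 1, vs ! 2} \<noteq> {vs ! 2, vs ! 3}" using d12 by (auto simp: doubleton_eq_iff)
  show False using all[OF m0] all[OF m1] all[OF m2] s0 s1 s2 n01 n02 n12 by metis
qed

lemma cycle_cut_pair:
  assumes cH: "is_cycle H" and h: "h \<in> edges H"
  shows "\<exists>c. cut_pair H h c"
proof -
  \<comment> \<open>run around the cycle ending with h: removing h and the second vertex isolates the first\<close>
  obtain vs es where c: "closed_path H vs es" "set vs = verts H" "set es = edges H" "length es \<ge> 3"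
    "last es = h"
    using cycle_closed_path_ending_at[OF cH h] by blast
  have w: "is_walk H vs es" using c(1) by (simp add: closed_path_def)
  have l: "length vs = Suc (length es)" using w by (simp add: is_walk_def)
  let ?k = "length es"
  note ix = closed_path_nth[OF c(1)]
  have e: "ends H (es ! i) = {vs ! i, vs ! Suc i}" if "i < ?k" for i
    using w that by (simp add: is_walk_def)
  have esne: "es \<noteq> []" using c(4) by auto
  have hk: "es ! (?k - 1) = h" using c(5) esne by (simp add: last_conv_nth)
  have sk: "Suc (?k - 1) = ?k" using c(4) by simp
  have eh: "ends H h = {vs ! (?k - 1), vs ! 0}" using e[of "?k - 1"] hk ix(1) c(4) sk by simp
  have d: "vs ! 1 \<noteq> vs ! 0" "vs ! 1 \<noteq> vs ! (?k - 1)" "vs ! (?k - 1) \<noteq> vs ! 0"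
  proof -
    have "vs ! 1 \<noteq> vs ! ?k" using ix(2)[of 1 ?k] c(4) esne by simp
    moreover have "vs ! 1 \<noteq> vs ! (?k - 1)" using ix(2)[of 1 "?k - 1"] c(4) esne by simp
    moreover have "vs ! (?k - 1) \<noteq> vs ! ?k" using ix(2)[of "?k - 1" ?k] c(4) esne by simp
    ultimately show "vs ! 1 \<noteq> vs ! 0" "vs ! 1 \<noteq> vs ! (?k - 1)" "vs ! (?k - 1) \<noteq> vs ! 0"
      using ix(1) by simp_all
  qed
  let ?c = "vs ! 1"
  have cV: "?c \<in> verts H"
  proof -
    have "1 < length vs" using l c(4) by linarith
    then show ?thesis using c(2) nth_mem by blast
  qed
  have at0: "j = 0 \<or> j = ?k - 1" if "j < ?k" "vs ! 0 \<in> ends H (es ! j)" for j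
  proof -
    have "vs ! 0 = vs ! j \<or> vs ! 0 = vs ! Suc j" using e[OF that(1)] that(2) by auto
    then show ?thesis
    proof
      assume "vs ! 0 = vs ! j"
      then show ?thesis using ix(1) ix(2)[of ?k j] that(1) esne by (cases "j = 0") auto
    next
      assume "vs ! 0 = vs ! Suc j"
      then show ?thesis using ix(1) ix(2)[of ?k "Suc j"] that(1) esne by auto
    qed
  qed
  have only0: "b = vs ! 0" if "reach H (edges H - {h}) (verts H - {?c}) (vs ! 0) b" for b
  proof -
    have "b \<in> {vs ! 0}"
    proof (rule reach_closed[OF that])
      show "vs ! 0 \<in> {vs ! 0}" by simp
    next
      fix s f q assume hyp: "s \<in> {vs ! 0}" "f \<in> edges H - {h}" "f \<in> edges H" "ends H f = {s, q}"
        "q \<in> verts H - {?c}" "q \<in> verts H"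
      obtain j where j: "j < ?k" "es ! j = f" using hyp(3) c(3) by (metis in_set_conv_nth)
      have "j = 0 \<or> j = ?k - 1" using at0[OF j(1)] j(2) hyp(1,4) by auto
      then have "j = 0" using j(2) hk hyp(2) by auto
      then have "{vs ! 0, q} = {vs ! 0, vs ! 1}" using e[of 0] j hyp(1,4) by auto
      then have "q = vs ! 1" using d(1) by (auto simp: doubleton_eq_iff)
      then show "q \<in> {vs ! 0}" using hyp(5) by simp
    qed
    then show ?thesis by simp
  qed
  have "\<not> reach H (edges H - {h}) (verts H - {?c}) (vs ! (?k - 1)) (vs ! 0)"
    using only0[OF reach_sym] d(3) by metis
  moreover have "?c \<notin> {vs ! (?k - 1), vs ! 0}" using d by auto
  ultimately have "cut_pair H h ?c" using cut_pairI[OF h eh cV] by blast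
  then show ?thesis ..
qed

lemma cycle_card_edges:
  assumes "is_cycle H" shows "card (edges H) \<ge> 3"
proof -
  obtain vs es where c: "closed_path H vs es" "set es = edges H" "length es \<ge> 3"
    using assms by (auto simp: is_cycle_def)
  have "distinct es" using c(1) by (simp add: closed_path_def)
  then have "card (edges H) = length es" using c(2) distinct_card by fastforce
  then show ?thesis using c(3) by simp
qed

lemma cycle_not_multiedge:
  assumes "is_cycle H" shows "\<not> is_multiedge H"
proof
  assume m: "is_multiedge H"
  obtain vs es where c: "closed_path H vs es" "set vs = verts H" "length es \<ge> 3"
    using assms by (auto simp: is_cycle_def)
  note ix = closed_path_nth[OF c(1)]
  have l: "length vs = Suc (length es)" using c(1) by (simp add: closed_path_def is_walk_def)
  have d: "vs ! 1 \<noteq> vs ! 2" "vs ! 1 \<noteq> vs ! 3" "vs ! 2 \<noteq> vs ! 3"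
    using ix(2)[of 1 2] ix(2)[of 1 3] ix(2)[of 2 3] c(3) by auto
  have "vs ! i \<in> verts H" if "i \<le> 3" for i
  proof -
    have "i < length vs" using that l c(3) by linarith
    then show ?thesis using c(2) nth_mem by blast
  qed
  then have inV: "{vs ! 1, vs ! 2, vs ! 3} \<subseteq> verts H" by auto
  have fin: "finite (verts H)" using m by (auto simp: is_multiedge_def intro: card_ge_0_finite)
  have "card {vs ! 1, vs ! 2, vs ! 3} \<le> card (verts H)" using card_mono[OF fin inV] .
  moreover have "card {vs ! 1, vs ! 2, vs ! 3} = 3" using d by auto
  ultimately show False using m by (simp add: is_multiedge_def)
qed

section \<open>Splitting\<close>

lemma embed_graph_simps:
  "verts (embed_graph G) = verts G" "edges (embed_graph G) = Inl ` edges G"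
  "ends (embed_graph G) (Inl e) = ends G e"
  by (simp_all add: embed_graph_def)

lemma reach_embed_graph_iff:
  "reach (embed_graph G) (Inl ` E) A a b \<longleftrightarrow> reach G E A a b"
proof
  show "reach (embed_graph G) (Inl ` E) A a b \<Longrightarrow> reach G E A a b"
  proof (induction rule: reach.induct)
    case (reach_step a b f c)
    then obtain e where "f = Inl e" "e \<in> E" "e \<in> edges G" by (auto simp: embed_graph_simps)
    then show ?case using reach_step by (intro reach.reach_step[OF reach_step.IH, of e])
      (simp_all add: embed_graph_simps)
  qed (simp add: reach.reach_refl embed_graph_simps)
  show "reach G E A a b \<Longrightarrow> reach (embed_graph G) (Inl ` E) A a b"
  proof (induction rule: reach.induct)
    case (reach_step a b f c)
    then show ?case by (intro reach.reach_step[OF reach_step.IH, of "Inl f"])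
      (simp_all add: embed_graph_simps)
  qed (simp add: reach.reach_refl embed_graph_simps)
qed

lemma wf_embed_graph: "wf_graph G \<Longrightarrow> wf_graph (embed_graph G)"
  by (auto simp: wf_graph_def embed_graph_simps)

lemma biconnected_embed_graph:
  assumes "biconnected G"
  shows "biconnected (embed_graph G)"
  using assms reach_embed_graph_iff[of G "edges G"]
  unfolding biconnected_iff_reach connected_graph_iff_reach embed_graph_simps by simp

lemma cut_pair_embed_graph_iff: "cut_pair (embed_graph G) (Inl e) c \<longleftrightarrow> cut_pair G e c"
proof -
  have "edges (embed_graph G) - {Inl e} = Inl ` (edges G - {e})" by (auto simp: embed_graph_simps)
  then show ?thesis
    unfolding cut_pair_def by (simp add: embed_graph_simps reach_embed_graph_iff inj_image_mem_iff)
qed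

lemma split_stepE:
  assumes "split_step D D'"
  obtains H u v F n where "H \<in> D" "biconnected H" "sep_split_set H u v F" "\<forall>H'\<in>D. Inr n \<notin> edges H'"
    "D' = (D - {H}) \<union> {split_piece H u v F n, split_piece H u v (edges H - F) n}"
  using assms unfolding split_step_def by blast

definition split_invariant :: "('v, 'e) mgraph \<Rightarrow> ('v, 'e + nat) mgraph set \<Rightarrow> bool" where
  "split_invariant G D \<longleftrightarrow> (\<forall>H\<in>D. wf_graph H \<and> biconnected H \<and>
     (\<forall>e c. cut_pair H (Inl e) c \<longrightarrow> cut_pair G e c))"

lemma split_invariant_init:
  assumes "wf_graph G" "biconnected G"
  shows "split_invariant G {embed_graph G}"
  using wf_embed_graph[OF assms(1)] biconnected_embed_graph[OF assms(2)]
  unfolding split_invariant_def by (simp add: cut_pair_embed_graph_iff)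

lemma split_invariant_step:
  assumes "split_step D D'" "split_invariant G D"
  shows "split_invariant G D'"
proof -
  obtain H u v F n where h: "H \<in> D" "biconnected H" "sep_split_set H u v F"
    "\<forall>H'\<in>D. Inr n \<notin> edges H'"
    "D' = (D - {H}) \<union> {split_piece H u v F n, split_piece H u v (edges H - F) n}"
    using split_stepE[OF assms(1)] by blast
  have wf: "wf_graph H" and lift: "\<And>e c. cut_pair H (Inl e) c \<Longrightarrow> cut_pair G e c"
    using assms(2) h(1) by (auto simp: split_invariant_def)
  have fresh: "Inr n \<notin> edges H" using h(1,4) by blast
  have piece: "wf_graph (split_piece H u v K n) \<and> biconnected (split_piece H u v K n) \<and>
      (\<forall>e c. cut_pair (split_piece H u v K n) (Inl e) c \<longrightarrow> cut_pair G e c)"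
    if sep: "sep_split_set H u v K" for K
  proof (intro conjI allI impI)
    fix e c assume "cut_pair (split_piece H u v K n) (Inl e) c"
    then show "cut_pair G e c" using cut_pair_lift_split_piece[OF wf sep fresh] lift by simp
  qed (fact wf_split_piece[OF wf sep fresh], fact biconnected_split_piece[OF wf sep fresh h(2)])
  show ?thesis
    using assms(2) h(5) piece[OF h(3)] piece[OF sep_split_set_complement[OF h(3)]]
    unfolding split_invariant_def by blast
qed

lemma split_steps_invariant:
  assumes "split_step\<^sup>*\<^sup>* {embed_graph G} D" "wf_graph G" "biconnected G"
  shows "split_invariant G D"
  using assms(1)
  by (induction rule: rtranclp_induct)
    (auto intro: split_invariant_init[OF assms(2,3)] split_invariant_step)

lemma split_steps_keep_cut_pair:
  assumes "split_step\<^sup>*\<^sup>* {embed_graph G} D" "wf_graph G" "biconnected G" "cut_pair G e c"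
  shows "\<exists>H\<in>D. \<exists>c'. cut_pair H (Inl e) c'"
  using assms(1)
proof (induction rule: rtranclp_induct)
  case base
  then show ?case using assms(4) by (auto simp: cut_pair_embed_graph_iff)
next
  case (step D D')
  then obtain B c' where B: "B \<in> D" "cut_pair B (Inl e) c'" by blast
  obtain H u v F n where h: "H \<in> D" "biconnected H" "sep_split_set H u v F"
    "\<forall>H'\<in>D. Inr n \<notin> edges H'"
    "D' = (D - {H}) \<union> {split_piece H u v F n, split_piece H u v (edges H - F) n}"
    using split_stepE[OF step.hyps(2)] by blast
  have wf: "wf_graph H"
    using split_steps_invariant[OF step.hyps(1) assms(2,3)] h(1) by (auto simp: split_invariant_def)
  have fresh: "Inr n \<notin> edges H" using h(1,4) by blast
  show ?case
  proof (cases "B = H")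
    case False
    then show ?thesis using B h(5) by blast
  next
    case True
    have "Inl e \<in> F \<or> Inl e \<in> edges H - F" using B True by (auto simp: cut_pair_def)
    then obtain P c'' where "P \<in> D'" "cut_pair P (Inl e) c''"
    proof
      assume "Inl e \<in> F"
      then show thesis
        using that cut_pair_split_piece[OF wf h(3) fresh h(2)] B True h(5) by blast
    next
      assume "Inl e \<in> edges H - F"
      then show thesis
        using that cut_pair_split_piece[OF wf sep_split_set_complement[OF h(3)] fresh h(2)]
          B True h(5)
        by blast
    qed
    then show ?thesis by blast
  qed
qed

lemma cut_pair_iff_cycle_after_splits:
  assumes "split_step\<^sup>*\<^sup>* {embed_graph G} D" "wf_graph G" "biconnected G"
    and "\<forall>H\<in>D. \<not> (biconnected H \<and> has_sep_pair H)"
  shows "(\<exists>c. cut_pair G e c) \<longleftrightarrow> (\<exists>H\<in>D. is_cycle H \<and> Inl e \<in> edges H)"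
proof
  assume "\<exists>c. cut_pair G e c"
  then obtain c where "cut_pair G e c" ..
  from split_steps_keep_cut_pair[OF assms(1-3) this]
  obtain H c' where H: "H \<in> D" "cut_pair H (Inl e) c'" by blast
  have inv: "wf_graph H" "biconnected H"
    using split_steps_invariant[OF assms(1-3)] H(1) unfolding split_invariant_def by simp_all
  moreover have "\<not> has_sep_pair H" using assms(4) H(1) inv(2) by simp
  ultimately have "is_cycle H" by (rule triconnected_cut_pair_is_cycle[OF _ _ _ H(2)])
  moreover have "Inl e \<in> edges H" using H(2) by (simp add: cut_pair_def)
  ultimately show "\<exists>H\<in>D. is_cycle H \<and> Inl e \<in> edges H" using H(1) by blast
next
  assume "\<exists>H\<in>D. is_cycle H \<and> Inl e \<in> edges H"
  then obtain H where H: "H \<in> D" "is_cycle H" "Inl e \<in> edges H" by blast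
  from cycle_cut_pair[OF H(2,3)] obtain c where "cut_pair H (Inl e) c" ..
  then have "cut_pair G e c"
    using split_steps_invariant[OF assms(1-3)] H(1) unfolding split_invariant_def by simp
  then show "\<exists>c. cut_pair G e c" ..
qed

section \<open>Expansions of virtual edges\<close>

definition inherits_real_edges :: "('v, 'e) mgraph \<Rightarrow> ('v, 'e + nat) mgraph \<Rightarrow> bool" where
  "inherits_real_edges G H \<longleftrightarrow> (\<forall>e. Inl e \<in> edges H \<longrightarrow> e \<in> edges G \<and> ends H (Inl e) = ends G e)"

definition real_edges :: "('e + nat) set \<Rightarrow> 'e set" where
  "real_edges X = {e. Inl e \<in> X}"

definition virtual_labels :: "('e + nat) set \<Rightarrow> nat set" where
  "virtual_labels X = {m. Inr m \<in> X}"

definition edge_verts :: "('v, 'e) mgraph \<Rightarrow> 'e set \<Rightarrow> 'v set" where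
  "edge_verts G X = \<Union>(ends G ` X)"

text \<open>An expansion b assigns to the virtual edge Inr m the set b m of edges of G it stands for,
  i.e. the edges on the far side of the split that created it. For a graph of the decomposition,
  its real edges and the sets b m partition the edges of G, and Inr m joins exactly the vertices
  that b m shares with the rest of G.\<close>

definition expand :: "(nat \<Rightarrow> 'e set) \<Rightarrow> ('e + nat) set \<Rightarrow> 'e set" where
  "expand b X = real_edges X \<union> \<Union>(b ` virtual_labels X)"

definition expansion_partitions :: "'e set \<Rightarrow> ('e + nat) set \<Rightarrow> (nat \<Rightarrow> 'e set) \<Rightarrow> bool" where
  "expansion_partitions E X b \<longleftrightarrow> expand b X = E \<and>
     (\<forall>m\<in>virtual_labels X. real_edges X \<inter> b m = {}) \<and>
     (\<forall>m\<in>virtual_labels X. \<forall>m'\<in>virtual_labels X. m \<noteq> m' \<longrightarrow> b m \<inter> b m' = {})"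

definition expansion_attached ::
  "('v, 'e) mgraph \<Rightarrow> ('v, 'e + nat) mgraph \<Rightarrow> (nat \<Rightarrow> 'e set) \<Rightarrow> bool"
  where
  "expansion_attached G H b \<longleftrightarrow> (\<forall>m\<in>virtual_labels (edges H).
     edge_verts G (b m) \<inter> edge_verts G (edges G - b m) \<subseteq> ends H (Inr m) \<and>
     verts H - ends H (Inr m) \<subseteq> edge_verts G (edges G - b m) \<and>
     ends H (Inr m) \<subseteq> edge_verts G (b m))"

definition expansion_ok :: "('v, 'e) mgraph \<Rightarrow> ('v, 'e + nat) mgraph \<Rightarrow> (nat \<Rightarrow> 'e set) \<Rightarrow> bool" where
  "expansion_ok G H b \<longleftrightarrow> wf_graph H \<and> inherits_real_edges G H \<and>
     expansion_partitions (edges G) (edges H) b \<and> expansion_attached G H b"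

definition expansions_agree ::
  "('v, 'e) mgraph \<Rightarrow> ('v, 'e + nat) mgraph \<Rightarrow> (nat \<Rightarrow> 'e set) \<Rightarrow> ('v, 'e + nat) mgraph \<Rightarrow>
   (nat \<Rightarrow> 'e set) \<Rightarrow> bool"
  where
  "expansions_agree G H1 b1 H2 b2 \<longleftrightarrow> (\<forall>m\<in>virtual_labels (edges H1) \<inter> virtual_labels (edges H2).
     b1 m = edges G - b2 m \<and> ends H1 (Inr m) = ends H2 (Inr m))"

definition expansions_ok ::
  "('v, 'e) mgraph \<Rightarrow> ('v, 'e + nat) mgraph set \<Rightarrow> (('v, 'e + nat) mgraph \<Rightarrow> nat \<Rightarrow> 'e set) \<Rightarrow> bool"
  where
  "expansions_ok G S \<beta> \<longleftrightarrow> (\<forall>H\<in>S. expansion_ok G H (\<beta> H)) \<and>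
     (\<forall>H1\<in>S. \<forall>H2\<in>S. H1 \<noteq> H2 \<longrightarrow> expansions_agree G H1 (\<beta> H1) H2 (\<beta> H2))"

lemma real_edges_simps:
  "real_edges (X \<union> Y) = real_edges X \<union> real_edges Y"
    "real_edges (X - Y) = real_edges X - real_edges Y"
  "real_edges {Inr n} = {}" "real_edges {} = {}"
  by (auto simp: real_edges_def)

lemma virtual_labels_simps:
  "virtual_labels (X \<union> Y) = virtual_labels X \<union> virtual_labels Y"
  "virtual_labels (X - Y) = virtual_labels X - virtual_labels Y"
  "virtual_labels {Inr n} = {n}" "virtual_labels {} = {}"
  by (auto simp: virtual_labels_def)

lemma expand_Un: "expand b (X \<union> Y) = expand b X \<union> expand b Y"
  by (auto simp: expand_def real_edges_simps virtual_labels_simps)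

lemma expand_mono: "X \<subseteq> Y \<Longrightarrow> expand b X \<subseteq> expand b Y"
  by (auto simp: expand_def real_edges_def virtual_labels_def)

lemma expand_cong: "(\<And>m. m \<in> virtual_labels X \<Longrightarrow> b m = b' m) \<Longrightarrow> expand b X = expand b' X"
  unfolding expand_def by auto

lemma expand_fun_upd: "n \<notin> virtual_labels X \<Longrightarrow> expand (b(n := Y)) X = expand b X"
  unfolding expand_def by auto

lemma expand_virtual_edge: "expand b {Inr n} = b n"
  by (simp add: expand_def real_edges_simps virtual_labels_simps)

lemma edge_verts_mono: "X \<subseteq> Y \<Longrightarrow> edge_verts G X \<subseteq> edge_verts G Y"
  by (auto simp: edge_verts_def)

lemma expansion_partitionsD:
  assumes "expansion_partitions E X b"
  shows "expand b X = E" "\<And>m. m \<in> virtual_labels X \<Longrightarrow> real_edges X \<inter> b m = {}"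
    "\<And>m m'. m \<in> virtual_labels X \<Longrightarrow> m' \<in> virtual_labels X \<Longrightarrow> m \<noteq> m' \<Longrightarrow> b m \<inter> b m' = {}"
  using assms unfolding expansion_partitions_def by blast+

lemma expansion_okD:
  assumes "expansion_ok G H b"
  shows "wf_graph H" "inherits_real_edges G H" "expansion_partitions (edges G) (edges H) b"
    "expand b (edges H) = edges G"
    "\<And>m. m \<in> virtual_labels (edges H) \<Longrightarrow> real_edges (edges H) \<inter> b m = {}"
    "\<And>m m'. m \<in> virtual_labels (edges H) \<Longrightarrow> m' \<in> virtual_labels (edges H) \<Longrightarrow> m \<noteq> m' \<Longrightarrow>
       b m \<inter> b m' = {}"
    "\<And>m. m \<in> virtual_labels (edges H) \<Longrightarrow>
       edge_verts G (b m) \<inter> edge_verts G (edges G - b m) \<subseteq> ends H (Inr m)"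
    "\<And>m. m \<in> virtual_labels (edges H) \<Longrightarrow> verts H - ends H (Inr m) \<subseteq> edge_verts G (edges G - b m)"
    "\<And>m. m \<in> virtual_labels (edges H) \<Longrightarrow> ends H (Inr m) \<subseteq> edge_verts G (b m)"
  using assms unfolding expansion_ok_def expansion_partitions_def expansion_attached_def by blast+

lemma expand_subset:
  assumes "expansion_partitions E X b" "Y \<subseteq> X"
  shows "expand b Y \<subseteq> E"
  using expand_mono[OF assms(2), of b] expansion_partitionsD(1)[OF assms(1)] by blast

lemma expansion_subset:
  assumes "expansion_partitions E X b" "m \<in> virtual_labels X"
  shows "b m \<subseteq> E"
  using expansion_partitionsD(1)[OF assms(1)] assms(2) by (auto simp: expand_def)

lemma expand_disjoint:
  assumes P: "expansion_partitions E X b" and YZ: "Y \<subseteq> X" "Z \<subseteq> X" "Y \<inter> Z = {}"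
  shows "expand b Y \<inter> expand b Z = {}"
proof -
  have sub: "real_edges Y \<subseteq> real_edges X" "virtual_labels Y \<subseteq> virtual_labels X"
    "real_edges Z \<subseteq> real_edges X" "virtual_labels Z \<subseteq> virtual_labels X"
    using YZ by (auto simp: real_edges_def virtual_labels_def)
  have disj: "real_edges Y \<inter> real_edges Z = {}" "virtual_labels Y \<inter> virtual_labels Z = {}"
    using YZ(3) by (auto simp: real_edges_def virtual_labels_def)
  have "False" if "e \<in> expand b Y" "e \<in> expand b Z" for e
    using that unfolding expand_def
  proof (elim UnE UN_E)
    fix m m' assume m: "m \<in> virtual_labels Y" "e \<in> b m" "m' \<in> virtual_labels Z" "e \<in> b m'"
    then have "m \<noteq> m'" using disj by auto
    then show False using expansion_partitionsD(3)[OF P, of m m'] m sub by auto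
  next
    fix m assume "m \<in> virtual_labels Z" "e \<in> b m" "e \<in> real_edges Y"
    then show False using expansion_partitionsD(2)[OF P, of m] sub by auto
  next
    fix m assume "m \<in> virtual_labels Y" "e \<in> b m" "e \<in> real_edges Z"
    then show False using expansion_partitionsD(2)[OF P, of m] sub by auto
  qed (use disj in auto)
  then show ?thesis by blast
qed

lemma expand_complement:
  assumes P: "expansion_partitions E X b" and F: "F \<subseteq> X"
  shows "expand b (X - F) = E - expand b F"
proof -
  have "F \<union> (X - F) = X" using F by blast
  then have "expand b F \<union> expand b (X - F) = E"
    using expansion_partitionsD(1)[OF P] expand_Un[of b F "X - F"] by simp
  moreover have "expand b F \<inter> expand b (X - F) = {}" using expand_disjoint[OF P F] by blast
  ultimately show ?thesis by blast
qed

lemma expand_shared_vertex: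
  assumes mi: "expansion_ok G H b" and X: "X \<subseteq> edges H" and z: "z \<in> edge_verts G (expand b X)"
      "z \<in> edge_verts G Z"
    and Z: "Z \<subseteq> edges G" "Z \<inter> expand b X = {}"
  shows "z \<in> \<Union>(ends H ` X)"
proof -
  from z(1) obtain e where e: "e \<in> expand b X" "z \<in> ends G e" by (auto simp: edge_verts_def)
  from e(1) show ?thesis unfolding expand_def
  proof (elim UnE UN_E)
    assume "e \<in> real_edges X"
    then have "Inl e \<in> X" by (simp add: real_edges_def)
    moreover have "ends H (Inl e) = ends G e"
      using expansion_okD(2)[OF mi] \<open>Inl e \<in> X\<close> X by (auto simp: inherits_real_edges_def)
    ultimately show ?thesis using e(2) by blast
  next
    fix m assume m: "m \<in> virtual_labels X" "e \<in> b m"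
    have mH: "m \<in> virtual_labels (edges H)" using m X by (auto simp: virtual_labels_def)
    have "b m \<subseteq> expand b X" using m(1) by (auto simp: expand_def)
    then have "Z \<subseteq> edges G - b m" using Z by blast
    then have "z \<in> edge_verts G (edges G - b m)"
      using z(2) edge_verts_mono[OF \<open>Z \<subseteq> edges G - b m\<close>, of G] by blast
    moreover have "z \<in> edge_verts G (b m)" using m e(2) by (auto simp: edge_verts_def)
    ultimately have "z \<in> ends H (Inr m)" using expansion_okD(7)[OF mi mH] by blast
    then show ?thesis using m(1) by (auto simp: virtual_labels_def)
  qed
qed

lemma expand_covers_ends:
  assumes mi: "expansion_ok G H b" and X: "X \<subseteq> edges H" and f: "f \<in> X" "z \<in> ends H f"
  shows "z \<in> edge_verts G (expand b X)"
proof (cases f)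
  case (Inl e)
  then have "ends H f = ends G e"
    using expansion_okD(2)[OF mi] f X by (auto simp: inherits_real_edges_def)
  moreover have "e \<in> expand b X" using f Inl by (auto simp: expand_def real_edges_def)
  ultimately show ?thesis using f(2) by (auto simp: edge_verts_def)
next
  case (Inr m)
  then have mH: "m \<in> virtual_labels (edges H)" using f X by (auto simp: virtual_labels_def)
  have "z \<in> edge_verts G (b m)" using expansion_okD(9)[OF mi mH] f(2) Inr by auto
  moreover have "b m \<subseteq> expand b X" using f Inr by (auto simp: expand_def virtual_labels_def)
  ultimately show ?thesis using edge_verts_mono[of "b m" "expand b X" G] by blast
qed

lemma expansion_partitions_split:
  assumes P: "expansion_partitions E X b" and F: "F \<subseteq> X" and fresh: "Inr n \<notin> X"
  shows "expansion_partitions E (F \<union> {Inr n}) (b(n := expand b (X - F)))"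
proof -
  let ?b = "b(n := expand b (X - F))"
  have nF: "n \<notin> virtual_labels F" using fresh F by (auto simp: virtual_labels_def)
  have labels: "virtual_labels (F \<union> {Inr n}) = virtual_labels F \<union> {n}"
    "real_edges (F \<union> {Inr n}) = real_edges F"
    by (auto simp: virtual_labels_def real_edges_def)
  have FX: "virtual_labels F \<subseteq> virtual_labels X" "real_edges F \<subseteq> real_edges X"
    using F by (auto simp: virtual_labels_def real_edges_def)
  have compl: "expand b (X - F) = E - expand b F" using expand_complement[OF P F] .
  have inF: "real_edges F \<subseteq> expand b F" "\<And>m. m \<in> virtual_labels F \<Longrightarrow> b m \<subseteq> expand b F"
    by (auto simp: expand_def)
  have old: "?b m = b m" if "m \<in> virtual_labels F" for m using that nF by auto
  show ?thesis unfolding expansion_partitions_def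
  proof (intro conjI ballI impI)
    have "expand ?b (F \<union> {Inr n}) = expand b F \<union> expand b (X - F)"
      using expand_Un[of ?b F "{Inr n}"] expand_fun_upd[OF nF] expand_virtual_edge[of ?b n] by simp
    then show "expand ?b (F \<union> {Inr n}) = E" using compl expand_subset[OF P F] by blast
  next
    fix m assume "m \<in> virtual_labels (F \<union> {Inr n})"
    then consider "m = n" | "m \<in> virtual_labels F" "m \<noteq> n" using labels by auto
    then show "real_edges (F \<union> {Inr n}) \<inter> ?b m = {}"
    proof cases
      case 1
      then show ?thesis using labels compl inF by auto
    next
      case 2
      then show ?thesis using expansion_partitionsD(2)[OF P, of m] FX labels old by auto
    qed
  next
    fix m m' assume m: "m \<in> virtual_labels (F \<union> {Inr n})" "m' \<in> virtual_labels (F \<union> {Inr n})"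
      "m \<noteq> m'"
    then consider "m = n" "m' \<in> virtual_labels F" | "m' = n" "m \<in> virtual_labels F"
      | "m \<in> virtual_labels F" "m' \<in> virtual_labels F" "m \<noteq> n" "m' \<noteq> n"
      using labels by auto
    then show "?b m \<inter> ?b m' = {}"
    proof cases
      case 3
      then show ?thesis using expansion_partitionsD(3)[OF P, of m m'] FX m(3) old by auto
    qed (use inF(2) old compl in auto)
  qed
qed

lemma expansion_attached_split_piece:
  assumes wf: "wf_graph H" and bc: "biconnected H" and s: "sep_split_set H u v F"
    and fresh: "Inr n \<notin> edges H" and mi: "expansion_ok G H b"
  shows "expansion_attached G (split_piece H u v F n) (b(n := expand b (edges H - F)))"
proof -
  let ?P = "split_piece H u v F n" and ?K = "edges H - F" and ?b = "b(n := expand b (edges H - F))"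
  note P = expansion_okD(3)[OF mi]
  have FE: "F \<subseteq> edges H" using sep_split_setD(4)[OF s] .
  have nF: "n \<notin> virtual_labels F" using fresh FE by (auto simp: virtual_labels_def)
  have compl: "expand b ?K = edges G - expand b F" using expand_complement[OF P FE] .
  have compl2: "edges G - expand b ?K = expand b F" using compl expand_subset[OF P FE] by blast
  have endsn: "ends ?P (Inr n) = {u, v}" by (simp add: split_piece_simps)
  have new1: "edge_verts G (expand b ?K) \<inter> edge_verts G (expand b F) \<subseteq> {u, v}"
  proof
    fix z assume z: "z \<in> edge_verts G (expand b ?K) \<inter> edge_verts G (expand b F)"
    have "z \<in> \<Union>(ends H ` ?K)"
      by (rule expand_shared_vertex[OF mi Diff_subset _ _ expand_subset[OF P FE]])
        (use z compl in auto)
    moreover have "z \<in> \<Union>(ends H ` F)"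
      by (rule expand_shared_vertex[OF mi FE _ _ expand_subset[OF P Diff_subset]])
        (use z compl in auto)
    ultimately show "z \<in> {u, v}" using sep_split_set_common_vertex[OF wf s] by blast
  qed
  have new2: "verts ?P - {u, v} \<subseteq> edge_verts G (expand b F)"
  proof
    fix z assume "z \<in> verts ?P - {u, v}"
    then obtain f where "f \<in> F" "z \<in> ends H f" by (auto simp: split_piece_simps)
    then show "z \<in> edge_verts G (expand b F)" using expand_covers_ends[OF mi FE] by blast
  qed
  have new3: "{u, v} \<subseteq> edge_verts G (expand b ?K)"
  proof -
    obtain k where k: "k \<in> ?K" using sep_split_set_nonempty[OF s] by blast
    have "reach H ({g \<in> ?K. ends H g \<noteq> {u, v}} \<union> {k}) (\<Union>(ends H ` ?K)) u v"
      using sep_split_set_connects_poles[OF wf bc sep_split_set_complement[OF s] k] by simp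
    then have "u \<in> \<Union>(ends H ` ?K)" "v \<in> \<Union>(ends H ` ?K)" using reachD by fast+
    then show ?thesis using expand_covers_ends[OF mi, of ?K] by blast
  qed
  have old: "edge_verts G (b m) \<inter> edge_verts G (edges G - b m) \<subseteq> ends ?P (Inr m) \<and>
      verts ?P - ends ?P (Inr m) \<subseteq> edge_verts G (edges G - b m) \<and>
      ends ?P (Inr m) \<subseteq> edge_verts G (b m)"
    if "m \<in> virtual_labels F" for m
  proof -
    have "m \<in> virtual_labels (edges H)" "ends ?P (Inr m) = ends H (Inr m)"
      using that FE nF by (auto simp: virtual_labels_def split_piece_simps)
    then show ?thesis
      using expansion_okD(7-9)[OF mi] split_piece_verts_subset[OF wf s fresh] by blast
  qed
  have "virtual_labels (edges ?P) = virtual_labels F \<union> {n}"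
    by (auto simp: split_piece_simps virtual_labels_def)
  then show ?thesis
    unfolding expansion_attached_def using new1 new2 new3 old nF compl2 endsn by auto
qed

lemma expansion_ok_split_piece:
  assumes wf: "wf_graph H" and bc: "biconnected H" and s: "sep_split_set H u v F"
    and fresh: "Inr n \<notin> edges H" and mi: "expansion_ok G H b"
  shows "expansion_ok G (split_piece H u v F n) (b(n := expand b (edges H - F)))"
proof -
  have FE: "F \<subseteq> edges H" using sep_split_setD(4)[OF s] .
  have "inherits_real_edges G (split_piece H u v F n)"
    using expansion_okD(2)[OF mi] FE
      unfolding inherits_real_edges_def by (auto simp: split_piece_simps)
  moreover have "expansion_partitions (edges G) (edges (split_piece H u v F n))
      (b(n := expand b (edges H - F)))"
    using expansion_partitions_split[OF expansion_okD(3)[OF mi] FE fresh]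
      by (simp add: split_piece_simps)
  ultimately show ?thesis
    unfolding expansion_ok_def
    using wf_split_piece[OF wf s fresh] expansion_attached_split_piece[OF assms] by blast
qed

lemma expansions_agree_split_pieces:
  assumes P: "expansion_partitions (edges G) (edges H) b" and F: "F \<subseteq> edges H"
  shows "expansions_agree G (split_piece H u v F n) (b(n := expand b (edges H - F)))
      (split_piece H u v (edges H - F) n) (b(n := expand b (edges H - (edges H - F))))"
proof -
  have "virtual_labels (edges (split_piece H u v F n)) \<inter>
      virtual_labels (edges (split_piece H u v (edges H - F) n)) = {n}"
    by (auto simp: split_piece_simps virtual_labels_def)
  moreover have "edges H - (edges H - F) = F" using F by blast
  moreover have "expand b (edges H - F) = edges G - expand b F" using expand_complement[OF P F] .
  ultimately show ?thesis unfolding expansions_agree_def by (simp add: split_piece_simps)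
qed

lemma expansions_ok_split_step:
  assumes st: "split_step D D'" and si: "split_invariant G D" and mi: "expansions_ok G D \<beta>"
  shows "\<exists>\<beta>'. expansions_ok G D' \<beta>'"
proof -
  obtain H u v F n where h: "H \<in> D" "biconnected H" "sep_split_set H u v F"
    "\<forall>H'\<in>D. Inr n \<notin> edges H'"
    "D' = (D - {H}) \<union> {split_piece H u v F n, split_piece H u v (edges H - F) n}"
    using split_stepE[OF st] by blast
  have wf: "wf_graph H" using si h(1) by (auto simp: split_invariant_def)
  have fresh: "Inr n \<notin> edges H" using h(1,4) by blast
  note sep = h(3) and sep' = sep_split_set_complement[OF h(3)]
  let ?K = "edges H - F" and ?b = "\<beta> H"
  let ?P1 = "split_piece H u v F n" and ?P2 = "split_piece H u v ?K n"
  let ?b1 = "?b(n := expand ?b ?K)" and ?b2 = "?b(n := expand ?b (edges H - ?K))"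
  have agree: "expansions_agree G X (\<beta> X) Y (\<beta> Y)" if "X \<in> D" "Y \<in> D" "X \<noteq> Y" for X Y
    using mi that unfolding expansions_ok_def by blast
  have okH: "expansion_ok G H ?b" using mi h(1) by (simp add: expansions_ok_def)
  have ok1: "expansion_ok G ?P1 ?b1" using expansion_ok_split_piece[OF wf h(2) sep fresh okH] .
  have ok2: "expansion_ok G ?P2 ?b2" using expansion_ok_split_piece[OF wf h(2) sep' fresh okH] .
  have new: "?P1 \<notin> D" "?P2 \<notin> D" using h(4) by (auto simp: split_piece_simps)
  have "?P1 \<noteq> ?P2"
  proof
    obtain f where f: "f \<in> F" using sep_split_set_nonempty[OF sep] by blast
    assume "?P1 = ?P2"
    then have "f \<in> ?K \<union> {Inr n}" using f by (metis UnI1 split_piece_simps(2))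
    then show False using f fresh sep_split_setD(4)[OF sep] by auto
  qed
  define \<beta>' where "\<beta>' = \<beta>(?P1 := ?b1, ?P2 := ?b2)"
  have \<beta>': "\<beta>' ?P1 = ?b1" "\<beta>' ?P2 = ?b2" "\<And>X. X \<in> D \<Longrightarrow> \<beta>' X = \<beta> X"
    using \<open>?P1 \<noteq> ?P2\<close> new by (auto simp: \<beta>'_def)
  have pieces: "expansions_agree G ?P1 ?b1 ?P2 ?b2 \<and> expansions_agree G ?P2 ?b2 ?P1 ?b1"
    using expansions_agree_split_pieces[OF expansion_okD(3)[OF okH] sep_split_setD(4)[OF sep]]
      expansions_agree_split_pieces[OF expansion_okD(3)[OF okH] Diff_subset[of "edges H" F]]
    by (simp add: Diff_Diff_Int Int_absorb1 sep_split_setD(4)[OF sep])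
  have old: "expansions_agree G P (?b(n := X)) Y (\<beta> Y) \<and> expansions_agree G Y (\<beta> Y) P (?b(n := X))"
    if "P = split_piece H u v K n" "K \<subseteq> edges H" "Y \<in> D" "Y \<noteq> H" for P K X Y
  proof -
    have "Inr n \<notin> edges Y" using h(4) that(3) by blast
    then have "m \<noteq> n \<and> m \<in> virtual_labels (edges H) \<and> ends P (Inr m) = ends H (Inr m)"
      if "m \<in> virtual_labels (edges P)" "m \<in> virtual_labels (edges Y)" for m
      using that \<open>P = _\<close> \<open>K \<subseteq> _\<close> by (auto simp: virtual_labels_def split_piece_simps)
    then show ?thesis
      using agree[OF h(1) that(3)] agree[OF that(3) h(1)] that(4)
        unfolding expansions_agree_def by auto
  qed
  have "expansions_ok G D' \<beta>'"
    unfolding expansions_ok_def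
  proof (intro conjI ballI impI)
    fix X assume "X \<in> D'"
    then consider "X \<in> D" | "X = ?P1" | "X = ?P2" using h(5) by blast
    then show "expansion_ok G X (\<beta>' X)"
      by cases (use mi \<beta>' ok1 ok2 in \<open>simp_all add: expansions_ok_def\<close>)
  next
    fix X1 X2 assume x: "X1 \<in> D'" "X2 \<in> D'" "X1 \<noteq> X2"
    have c: "(X \<in> D \<and> X \<noteq> H) \<or> X = ?P1 \<or> X = ?P2" if "X \<in> D'" for X using that h(5) by blast
    from c[OF x(1)] c[OF x(2)] x(3) show "expansions_agree G X1 (\<beta>' X1) X2 (\<beta>' X2)"
    proof (elim disjE conjE)
      assume "X1 \<in> D" "X2 \<in> D"
      then show ?thesis using agree x(3) \<beta>'(3) by simp
    qed (use pieces \<beta>' old[OF refl sep_split_setD(4)[OF sep]] old[OF refl Diff_subset] in auto)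
  qed
  then show ?thesis by blast
qed

lemma expansions_ok_init:
  assumes "wf_graph G" shows "expansions_ok G {embed_graph G} \<beta>"
proof -
  have "virtual_labels (edges (embed_graph G)) = {}" "real_edges (edges (embed_graph G)) = edges G"
    by (auto simp: embed_graph_simps virtual_labels_def real_edges_def)
  then have "expansion_ok G (embed_graph G) (\<beta> (embed_graph G))"
    unfolding expansion_ok_def expansion_partitions_def expansion_attached_def
    using wf_embed_graph[OF assms]
      by (auto simp: inherits_real_edges_def embed_graph_simps expand_def)
  then show ?thesis by (simp add: expansions_ok_def)
qed

lemma split_steps_expansions_ok:
  assumes "split_step\<^sup>*\<^sup>* {embed_graph G} D" "wf_graph G" "biconnected G"
  shows "\<exists>\<beta>. expansions_ok G D \<beta>"
  using assms(1)
proof (induction rule: rtranclp_induct)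
  case base then show ?case using expansions_ok_init[OF assms(2)] by blast
next
  case (step D D')
  then obtain \<beta> where "expansions_ok G D \<beta>" by blast
  then show ?case
    using expansions_ok_split_step[OF step.hyps(2) split_steps_invariant[OF step.hyps(1) assms(2,3)]]
    by blast
qed

section \<open>Merging\<close>

lemma expansions_agree_common_label:
  fixes G :: "('v, 'e) mgraph"
  assumes mA: "expansion_ok G A bA" and mB: "expansion_ok G B bB"
    and agree: "expansions_agree G A bA B bB"
    and n: "n \<in> virtual_labels (edges A)"
        "n \<in> virtual_labels (edges B)" and cA: "card (edges A) \<ge> 3"
  shows "virtual_labels (edges A) \<inter> virtual_labels (edges B) = {n}"
proof (rule ccontr)
  let ?EG = "edges G"
  assume "virtual_labels (edges A) \<inter> virtual_labels (edges B) \<noteq> {n}"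
  then obtain m where m: "m \<in> virtual_labels (edges A)" "m \<in> virtual_labels (edges B)" "m \<noteq> n"
    using n by blast
  have nm: "bA n = ?EG - bB n" "bA m = ?EG - bB m"
    using agree n m unfolding expansions_agree_def by auto
  \<comment> \<open>the far sides of Inr n and Inr m in B are disjoint, so those in A cover G\<close>
  have cover: "x \<in> bA n \<or> x \<in> bA m" if "x \<in> ?EG" for x
  proof (rule ccontr)
    assume "\<not> (x \<in> bA n \<or> x \<in> bA m)"
    then have "x \<in> bB n" "x \<in> bB m" using nm that by auto
    then show False using expansion_okD(6)[OF mB n(2) m(2)] m(3) by auto
  qed
  have "real_edges (edges A) \<subseteq> ?EG"
    using expansion_okD(2)[OF mA] by (auto simp: inherits_real_edges_def real_edges_def)
  then have no_real: "real_edges (edges A) = {}"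
    using cover expansion_okD(5)[OF mA n(1)] expansion_okD(5)[OF mA m(1)] by blast
  have two_labels: "l \<in> {n, m}" if l: "l \<in> virtual_labels (edges A)" for l
  proof (rule ccontr)
    assume ln: "l \<notin> {n, m}"
    have "bA l \<inter> bA n = {}" "bA l \<inter> bA m = {}"
      using expansion_okD(6)[OF mA l n(1)] expansion_okD(6)[OF mA l m(1)] ln by auto
    then have "bA l = {}" using cover expansion_subset[OF expansion_okD(3)[OF mA] l] by blast
    then have "ends A (Inr l) = {}" using expansion_okD(9)[OF mA l] by (simp add: edge_verts_def)
    moreover have "card (ends A (Inr l)) = 2"
      using expansion_okD(1)[OF mA] l by (auto simp: wf_graph_def virtual_labels_def)
    ultimately show False by simp
  qed
  have "edges A \<subseteq> {Inr n, Inr m}"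
  proof
    fix g assume g: "g \<in> edges A"
    show "g \<in> {Inr n, Inr m}"
      using g no_real two_labels by (cases g) (auto simp: real_edges_def virtual_labels_def)
  qed
  then have "card (edges A) \<le> card {Inr n, Inr m :: 'e + nat}" by (intro card_mono) auto
  also have "\<dots> \<le> 2" by (simp add: card_insert_if)
  finally show False using cA by simp
qed

lemma expansions_agree_common_edges:
  assumes mA: "expansion_ok G A bA" and mB: "expansion_ok G B bB"
    and agree: "expansions_agree G A bA B bB"
    and n: "n \<in> virtual_labels (edges A)"
        "n \<in> virtual_labels (edges B)" and cA: "card (edges A) \<ge> 3"
  shows "edges A \<inter> edges B = {Inr n}"
proof -
  have nAB: "bA n = edges G - bB n" using agree n unfolding expansions_agree_def by auto
  have RA: "real_edges (edges A) \<subseteq> edges G"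
    using expansion_okD(2)[OF mA] by (auto simp: inherits_real_edges_def real_edges_def)
  have "e \<notin> real_edges (edges B)" if e: "e \<in> real_edges (edges A)" for e
  proof
    assume eB: "e \<in> real_edges (edges B)"
    have "e \<notin> bA n" using expansion_okD(5)[OF mA n(1)] e by auto
    then have "e \<in> bB n" using nAB RA e by auto
    then show False using expansion_okD(5)[OF mB n(2)] eB by auto
  qed
  then have real: "real_edges (edges A) \<inter> real_edges (edges B) = {}" by blast
  note labels = expansions_agree_common_label[OF assms]
  have "g \<in> {Inr n}" if g: "g \<in> edges A \<inter> edges B" for g
  proof (cases g)
    case (Inl e)
    then show ?thesis using g real by (auto simp: real_edges_def)
  next
    case (Inr l)
    then show ?thesis using g labels by (auto simp: virtual_labels_def)
  qed
  moreover have "Inr n \<in> edges A \<inter> edges B" using n by (simp add: virtual_labels_def)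
  ultimately show ?thesis by blast
qed

lemma expansions_agree_common_verts:
  assumes mA: "expansion_ok G A bA" and mB: "expansion_ok G B bB"
    and agree: "expansions_agree G A bA B bB"
    and n: "n \<in> virtual_labels (edges A)" "n \<in> virtual_labels (edges B)"
  shows "verts A \<inter> verts B \<subseteq> ends A (Inr n)"
proof
  fix z assume z: "z \<in> verts A \<inter> verts B"
  have nAB: "bA n = edges G - bB n" "ends A (Inr n) = ends B (Inr n)"
    using agree n unfolding expansions_agree_def by auto
  have sides: "edges G - bB n = bA n"
    using nAB(1) expansion_subset[OF expansion_okD(3)[OF mB] n(2)] by blast
  show "z \<in> ends A (Inr n)"
  proof (rule ccontr)
    assume zn: "z \<notin> ends A (Inr n)"
    \<comment> \<open>otherwise z is a vertex shared by the far sides of Inr n in A and in B\<close>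
    have "z \<in> edge_verts G (edges G - bA n)" using expansion_okD(8)[OF mA n(1)] z zn by auto
    moreover have "z \<in> edge_verts G (bA n)"
      using expansion_okD(8)[OF mB n(2)] z zn nAB(2) sides by auto
    ultimately show False using expansion_okD(7)[OF mA n(1)] zn by blast
  qed
qed

lemma merge_graphs_simps:
  "verts (merge_graphs A B n) = verts A \<union> verts B"
  "edges (merge_graphs A B n) = (edges A \<union> edges B) - {Inr n}"
  "ends (merge_graphs A B n) = (\<lambda>e. if e \<in> edges A then ends A e else ends B e)"
  by (simp_all add: merge_graphs_def)

lemma expansion_partitions_merge:
  assumes PA: "expansion_partitions E XA bA" and PB: "expansion_partitions E XB bB"
    and n: "n \<in> virtual_labels XA" "n \<in> virtual_labels XB" and nAB: "bA n = E - bB n"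
    and XX: "XA \<inter> XB = {Inr n}"
  shows "expansion_partitions E ((XA \<union> XB) - {Inr n}) (\<lambda>m. if Inr m \<in> XA then bA m else bB m)"
proof -
  let ?X = "(XA \<union> XB) - {Inr n}" and ?b = "\<lambda>m. if Inr m \<in> XA then bA m else bB m"
  have bBn: "bB n = E - bA n" using nAB expansion_subset[OF PB n(2)] by blast
  have labels: "virtual_labels ?X = (virtual_labels XA - {n}) \<union> (virtual_labels XB - {n})"
    and reals: "real_edges ?X = real_edges XA \<union> real_edges XB"
    by (auto simp: virtual_labels_def real_edges_def)
  have bA: "?b m = bA m" if "m \<in> virtual_labels XA" for m
    using that by (simp add: virtual_labels_def)
  have bB: "?b m = bB m" if "m \<in> virtual_labels XB" "m \<noteq> n" for m
    using that XX by (auto simp: virtual_labels_def)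
  have sA: "expand bA (XA - {Inr n}) = bB n"
    using expand_complement[OF PA, of "{Inr n}"] n(1) bBn expand_virtual_edge[of bA n]
    by (simp add: virtual_labels_def)
  have sB: "expand bB (XB - {Inr n}) = bA n"
    using expand_complement[OF PB, of "{Inr n}"] n(2) nAB expand_virtual_edge[of bB n]
    by (simp add: virtual_labels_def)
  have disjn: "bA n \<inter> bB n = {}" using bBn by blast
  have Asub: "real_edges XA \<subseteq> bB n" "\<And>m. m \<in> virtual_labels XA \<Longrightarrow> m \<noteq> n \<Longrightarrow> bA m \<subseteq> bB n"
    using sA by (auto simp: expand_def real_edges_def virtual_labels_def)
  have Bsub: "real_edges XB \<subseteq> bA n" "\<And>m. m \<in> virtual_labels XB \<Longrightarrow> m \<noteq> n \<Longrightarrow> bB m \<subseteq> bA n"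
    using sB by (auto simp: expand_def real_edges_def virtual_labels_def)
  have side: "(m \<in> virtual_labels XA \<and> m \<noteq> n) \<or>
      (m \<in> virtual_labels XB \<and> m \<noteq> n \<and> m \<notin> virtual_labels XA)"
    if "m \<in> virtual_labels ?X" for m
    using that labels by auto
  show ?thesis unfolding expansion_partitions_def
  proof (intro conjI ballI impI)
    have "?X = (XA - {Inr n}) \<union> (XB - {Inr n})" by blast
    then have "expand ?b ?X = expand ?b (XA - {Inr n}) \<union> expand ?b (XB - {Inr n})"
      by (simp add: expand_Un)
    also have "expand ?b (XA - {Inr n}) = expand bA (XA - {Inr n})"
      by (rule expand_cong) (auto simp: virtual_labels_def)
    also have "expand ?b (XB - {Inr n}) = expand bB (XB - {Inr n})"
      by (rule expand_cong) (use bB in \<open>auto simp: virtual_labels_def\<close>)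
    finally show "expand ?b ?X = E" using sA sB bBn expansion_subset[OF PA n(1)] by blast
  next
    fix m assume "m \<in> virtual_labels ?X"
    from side[OF this] show "real_edges ?X \<inter> ?b m = {}"
    proof (elim disjE conjE)
      assume m: "m \<in> virtual_labels XA" "m \<noteq> n"
      then show ?thesis
        using reals bA[OF m(1)] expansion_partitionsD(2)[OF PA m(1)] Asub(2)[OF m] Bsub(1) disjn
          by auto
    next
      assume m: "m \<in> virtual_labels XB" "m \<noteq> n" "m \<notin> virtual_labels XA"
      then show ?thesis
        using reals bB[OF m(1,2)] expansion_partitionsD(2)[OF PB m(1)] Bsub(2)[OF m(1,2)] Asub(1)
          disjn
        by auto
    qed
  next
    fix m m' assume mm: "m \<in> virtual_labels ?X" "m' \<in> virtual_labels ?X" "m \<noteq> m'"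
    from side[OF mm(1)] side[OF mm(2)] show "?b m \<inter> ?b m' = {}"
    proof (elim disjE conjE)
      assume "m \<in> virtual_labels XA" "m' \<in> virtual_labels XA"
      then show ?thesis using expansion_partitionsD(3)[OF PA, of m m'] mm(3) bA by auto
    next
      assume h: "m \<in> virtual_labels XA" "m \<noteq> n" "m' \<in> virtual_labels XB" "m' \<noteq> n"
      then show ?thesis
        using bA[OF h(1)] bB[OF h(3,4)] Asub(2)[OF h(1,2)] Bsub(2)[OF h(3,4)] disjn by auto
    next
      assume h: "m \<in> virtual_labels XB" "m \<noteq> n" "m' \<in> virtual_labels XA" "m' \<noteq> n"
      then show ?thesis
        using bA[OF h(3)] bB[OF h(1,2)] Asub(2)[OF h(3,4)] Bsub(2)[OF h(1,2)] disjn by auto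
    next
      assume h: "m \<in> virtual_labels XB" "m \<noteq> n" "m' \<in> virtual_labels XB" "m' \<noteq> n"
      then show ?thesis
        using expansion_partitionsD(3)[OF PB h(1,3)] mm(3) bB[OF h(1,2)] bB[OF h(3,4)] by auto
    qed
  qed
qed

lemma expansion_attached_merge_graphs:
  assumes mA: "expansion_ok G A bA" and mB: "expansion_ok G B bB"
    and n: "n \<in> virtual_labels (edges A)" "n \<in> virtual_labels (edges B)"
    and nAB: "bA n = edges G - bB n" "ends A (Inr n) = ends B (Inr n)"
    and EE: "edges A \<inter> edges B = {Inr n}"
  shows "expansion_attached G (merge_graphs A B n) (\<lambda>m. if Inr m \<in> edges A then bA m else bB m)"
proof -
  let ?M = "merge_graphs A B n" and ?b = "\<lambda>m. if Inr m \<in> edges A then bA m else bB m"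
    and ?EG = "edges G"
  have bBn: "bB n = ?EG - bA n"
    using nAB(1) expansion_subset[OF expansion_okD(3)[OF mB] n(2)] by blast
  have labels:
    "virtual_labels (edges ?M) = (virtual_labels (edges A) - {n}) \<union> (virtual_labels (edges B) - {n})"
    by (auto simp: merge_graphs_simps virtual_labels_def)
  have bA: "?b m = bA m" "ends ?M (Inr m) = ends A (Inr m)" if "m \<in> virtual_labels (edges A)" for m
    using that by (simp_all add: merge_graphs_simps virtual_labels_def)
  have bB: "?b m = bB m" "ends ?M (Inr m) = ends B (Inr m)" if "m \<in> virtual_labels (edges B)"
    "m \<noteq> n" for m
    using that EE by (auto simp: virtual_labels_def merge_graphs_simps)
  have other: "verts ?M - verts A \<subseteq> edge_verts G (?EG - bB n)"
    "verts ?M - verts B \<subseteq> edge_verts G (?EG - bA n)"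
  proof -
    have "ends B (Inr n) \<subseteq> verts A" "ends A (Inr n) \<subseteq> verts B"
      using nAB(2) expansion_okD(1)[OF mA] expansion_okD(1)[OF mB] n
      by (auto simp: wf_graph_def virtual_labels_def)
    moreover have "verts ?M = verts A \<union> verts B" by (simp add: merge_graphs_simps)
    ultimately show "verts ?M - verts A \<subseteq> edge_verts G (?EG - bB n)"
      "verts ?M - verts B \<subseteq> edge_verts G (?EG - bA n)"
      using expansion_okD(8)[OF mB n(2)] expansion_okD(8)[OF mA n(1)] by blast+
  qed
  show ?thesis unfolding expansion_attached_def
  proof (intro ballI)
    fix m assume "m \<in> virtual_labels (edges ?M)"
    then consider "m \<in> virtual_labels (edges A)" "m \<noteq> n"
      | "m \<in> virtual_labels (edges B)" "m \<noteq> n" "m \<notin> virtual_labels (edges A)"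
      using labels by blast
    then show "edge_verts G (?b m) \<inter> edge_verts G (?EG - ?b m) \<subseteq> ends ?M (Inr m) \<and>
      verts ?M - ends ?M (Inr m) \<subseteq> edge_verts G (?EG - ?b m) \<and>
      ends ?M (Inr m) \<subseteq> edge_verts G (?b m)"
    proof cases
      case 1
      have "n \<noteq> m" using 1(2) by simp
      then have "?EG - bB n \<subseteq> ?EG - bA m" using bBn expansion_okD(6)[OF mA n(1) 1(1)] by blast
      then have "verts ?M - verts A \<subseteq> edge_verts G (?EG - bA m)"
        using other(1) edge_verts_mono[of "?EG - bB n" "?EG - bA m" G] by blast
      moreover note expansion_okD(7-9)[OF mA 1(1)]
      ultimately show ?thesis unfolding bA[OF 1(1)] by blast
    next
      case 2
      have "n \<noteq> m" using 2(2) by simp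
      then have "?EG - bA n \<subseteq> ?EG - bB m" using bBn expansion_okD(6)[OF mB n(2) 2(1)] by blast
      then have "verts ?M - verts B \<subseteq> edge_verts G (?EG - bB m)"
        using other(2) edge_verts_mono[of "?EG - bA n" "?EG - bB m" G] by blast
      moreover note expansion_okD(7-9)[OF mB 2(1)]
      ultimately show ?thesis unfolding bB[OF 2(1,2)] by blast
    qed
  qed
qed

lemma expansion_ok_merge_graphs:
  assumes mA: "expansion_ok G A bA" and mB: "expansion_ok G B bB"
    and n: "n \<in> virtual_labels (edges A)" "n \<in> virtual_labels (edges B)"
    and nAB: "bA n = edges G - bB n" "ends A (Inr n) = ends B (Inr n)"
    and EE: "edges A \<inter> edges B = {Inr n}"
  shows "expansion_ok G (merge_graphs A B n) (\<lambda>m. if Inr m \<in> edges A then bA m else bB m)"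
proof -
  have "wf_graph (merge_graphs A B n)"
    using expansion_okD(1)[OF mA] expansion_okD(1)[OF mB]
      unfolding wf_graph_def merge_graphs_simps by auto
  moreover have "inherits_real_edges G (merge_graphs A B n)"
    using expansion_okD(2)[OF mA] expansion_okD(2)[OF mB]
    unfolding inherits_real_edges_def merge_graphs_simps by auto
  moreover have "expansion_partitions (edges G) (edges (merge_graphs A B n))
      (\<lambda>m. if Inr m \<in> edges A then bA m else bB m)"
    using expansion_partitions_merge[OF expansion_okD(3)[OF mA] expansion_okD(3)[OF mB] n nAB(1) EE]
    by (simp add: merge_graphs_simps)
  ultimately show ?thesis
    unfolding expansion_ok_def using expansion_attached_merge_graphs[OF assms] by blast
qed

lemma expansions_agree_merge_graphs:
  assumes "expansions_agree G A bA Y bY" "expansions_agree G Y bY A bA"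
      "expansions_agree G B bB Y bY" "expansions_agree G Y bY B bB"
  shows "expansions_agree G (merge_graphs A B n) (\<lambda>m. if Inr m \<in> edges A then bA m else bB m) Y bY \<and>
         expansions_agree G Y bY (merge_graphs A B n) (\<lambda>m. if Inr m \<in> edges A then bA m else bB m)"
  using assms unfolding expansions_agree_def by (auto simp: merge_graphs_simps virtual_labels_def)

lemma mergeable_card_edges:
  assumes "mergeable A B n" shows "card (edges A) \<ge> 3" "card (edges B) \<ge> 3"
  using assms cycle_card_edges unfolding mergeable_def is_multiedge_def by auto

lemma merge_stepE:
  assumes "merge_step S S'"
  obtains A B n where "A \<in> S" "B \<in> S" "mergeable A B n" "S' = (S - {A, B}) \<union> {merge_graphs A B n}"
  using assms unfolding merge_step_def by blast

lemma expansions_ok_mergeable: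
  assumes mi: "expansions_ok G S \<beta>" and h: "A \<in> S" "B \<in> S" "mergeable A B n"
  shows "edges A \<inter> edges B = {Inr n}" "verts A \<inter> verts B \<subseteq> ends A (Inr n)"
    "ends A (Inr n) = ends B (Inr n)"
proof -
  have AB: "A \<noteq> B" "n \<in> virtual_labels (edges A)" "n \<in> virtual_labels (edges B)"
    using h(3) by (auto simp: mergeable_def virtual_labels_def)
  have ok: "expansion_ok G A (\<beta> A)" "expansion_ok G B (\<beta> B)"
    and agree: "expansions_agree G A (\<beta> A) B (\<beta> B)"
    using mi h(1,2) AB(1) unfolding expansions_ok_def by blast+
  show "edges A \<inter> edges B = {Inr n}"
    by (rule expansions_agree_common_edges[OF ok agree AB(2,3) mergeable_card_edges(1)[OF h(3)]])
  show "verts A \<inter> verts B \<subseteq> ends A (Inr n)"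
    by (rule expansions_agree_common_verts[OF ok agree AB(2,3)])
  show "ends A (Inr n) = ends B (Inr n)" using agree AB(2,3) unfolding expansions_agree_def by auto
qed

lemma expansions_ok_merge_step:
  assumes st: "merge_step S S'" and mi: "expansions_ok G S \<beta>"
  shows "\<exists>\<beta>'. expansions_ok G S' \<beta>'"
proof -
  obtain A B n where h: "A \<in> S" "B \<in> S" "mergeable A B n" "S' = (S - {A, B}) \<union> {merge_graphs A B n}"
    using merge_stepE[OF st] by blast
  have AB: "A \<noteq> B" "n \<in> virtual_labels (edges A)" "n \<in> virtual_labels (edges B)"
    using h(3) by (auto simp: mergeable_def virtual_labels_def)
  have agree: "expansions_agree G X (\<beta> X) Y (\<beta> Y)" if "X \<in> S" "Y \<in> S" "X \<noteq> Y" for X Y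
    using mi that unfolding expansions_ok_def by blast
  have ok: "expansion_ok G X (\<beta> X)" if "X \<in> S" for X using mi that by (simp add: expansions_ok_def)
  let ?M = "merge_graphs A B n" and ?bM = "\<lambda>m. if Inr m \<in> edges A then \<beta> A m else \<beta> B m"
  have nAB: "\<beta> A n = edges G - \<beta> B n" "ends A (Inr n) = ends B (Inr n)"
    using agree[OF h(1,2) AB(1)] AB(2,3) unfolding expansions_agree_def by auto
  have okM: "expansion_ok G ?M ?bM"
    using expansion_ok_merge_graphs[OF ok[OF h(1)] ok[OF h(2)] AB(2,3) nAB
        expansions_ok_mergeable(1)[OF mi h(1-3)]] .
  have agreeM: "expansions_agree G ?M ?bM Y (\<beta> Y) \<and> expansions_agree G Y (\<beta> Y) ?M ?bM"
    if "Y \<in> S" "Y \<noteq> A" "Y \<noteq> B" for Y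
    using expansions_agree_merge_graphs[OF agree[OF h(1) that(1)] agree[OF that(1) h(1)]
        agree[OF h(2) that(1)] agree[OF that(1) h(2)]] that
    by auto
  define \<beta>' where "\<beta>' = \<beta>(?M := ?bM)"
  have cases: "X = ?M \<or> (X \<in> S \<and> X \<noteq> A \<and> X \<noteq> B \<and> X \<noteq> ?M)" if "X \<in> S'" for X
    using that h(4) by blast
  have "expansions_ok G S' \<beta>'"
    unfolding expansions_ok_def
  proof (intro conjI ballI impI)
    fix X assume "X \<in> S'"
    then show "expansion_ok G X (\<beta>' X)" using cases okM ok by (auto simp: \<beta>'_def)
  next
    fix X1 X2 assume x: "X1 \<in> S'" "X2 \<in> S'" "X1 \<noteq> X2"
    from cases[OF x(1)] cases[OF x(2)] x(3) show "expansions_agree G X1 (\<beta>' X1) X2 (\<beta>' X2)"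
    proof (elim disjE conjE)
      assume "X1 \<in> S" "X1 \<noteq> ?M" "X2 \<in> S" "X2 \<noteq> ?M"
      then show ?thesis using agree x(3) by (simp add: \<beta>'_def)
    qed (use agreeM in \<open>auto simp: \<beta>'_def\<close>)
  qed
  then show ?thesis by blast
qed

lemma merge_step_keeps_cycle:
  assumes st: "merge_step S S'" and mi: "expansions_ok G S \<beta>"
    and K: "K \<in> S" "is_cycle K" "Inl e \<in> edges K"
  shows "\<exists>K'\<in>S'. is_cycle K' \<and> Inl e \<in> edges K'"
proof -
  obtain A B n where h: "A \<in> S" "B \<in> S" "mergeable A B n" "S' = (S - {A, B}) \<union> {merge_graphs A B n}"
    using merge_stepE[OF st] by blast
  show ?thesis
  proof (cases "K = A \<or> K = B")
    case False
    then show ?thesis using K h(4) by blast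
  next
    case True
    \<comment> \<open>a cycle is only merged with another cycle\<close>
    then have cyc: "is_cycle A" "is_cycle B"
      using h(3) K(2) cycle_not_multiedge unfolding mergeable_def by blast+
    have nn: "Inr n \<in> edges A" "Inr n \<in> edges B" using h(3) by (auto simp: mergeable_def)
    have "is_cycle (merge_graphs A B n)"
      by (rule is_cycle_merge_graphs[OF cyc nn expansions_ok_mergeable[OF mi h(1-3)]])
    moreover have "Inl e \<in> edges (merge_graphs A B n)"
      using True K(3) by (auto simp: merge_graphs_simps)
    ultimately show ?thesis using h(4) by blast
  qed
qed

lemma merge_steps_keep_cycle:
  assumes "merge_step\<^sup>*\<^sup>* D S" "expansions_ok G D \<beta>" "\<exists>P\<in>D. is_cycle P \<and> Inl e \<in> edges P"
  shows "\<exists>K\<in>S. is_cycle K \<and> Inl e \<in> edges K"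
proof -
  have "(\<exists>\<beta>. expansions_ok G S \<beta>) \<and> (\<exists>K\<in>S. is_cycle K \<and> Inl e \<in> edges K)"
    using assms(1)
  proof (induction rule: rtranclp_induct)
    case base
    then show ?case using assms(2,3) by blast
  next
    case (step S S')
    then obtain \<beta> K where "expansions_ok G S \<beta>" "K \<in> S" "is_cycle K" "Inl e \<in> edges K" by blast
    then show ?case
      using expansions_ok_merge_step[OF step.hyps(2)] merge_step_keeps_cycle[OF step.hyps(2)]
      by blast
  qed
  then show ?thesis ..
qed

lemma merge_steps_cycle_origin:
  assumes "merge_step\<^sup>*\<^sup>* D S"
  shows "\<forall>K\<in>S. is_cycle K \<longrightarrow> Inl e \<in> edges K \<longrightarrow> (\<exists>P\<in>D. is_cycle P \<and> Inl e \<in> edges P)"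
  using assms
proof (induction rule: rtranclp_induct)
  case base then show ?case by blast
next
  case (step S S')
  obtain A B n where h: "A \<in> S" "B \<in> S" "mergeable A B n" "S' = (S - {A, B}) \<union> {merge_graphs A B n}"
    using merge_stepE[OF step.hyps(2)] by blast
  show ?case
  proof (intro ballI impI)
    fix K assume K: "K \<in> S'" "is_cycle K" "Inl e \<in> edges K"
    show "\<exists>P\<in>D. is_cycle P \<and> Inl e \<in> edges P"
    proof (cases "K = merge_graphs A B n")
      case False then show ?thesis using K h(4) step.IH by blast
    next
      case True
      have "\<not> (is_multiedge A \<and> is_multiedge B)" using merge_multiedges_not_cycle K(2) True by blast
      then have "is_cycle A \<and> is_cycle B" using h(3) by (auto simp: mergeable_def)
      moreover have "Inl e \<in> edges A \<or> Inl e \<in> edges B"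
        using K(3) True by (auto simp: merge_graphs_simps)
      ultimately show ?thesis using step.IH h(1,2) by blast
    qed
  qed
qed

lemma cycle_after_merges_iff:
  assumes "split_step\<^sup>*\<^sup>* {embed_graph G} D" "wf_graph G" "biconnected G" "merge_step\<^sup>*\<^sup>* D C"
  shows "(\<exists>H\<in>D. is_cycle H \<and> Inl e \<in> edges H) \<longleftrightarrow> (\<exists>H\<in>C. is_cycle H \<and> Inl e \<in> edges H)"
proof
  obtain \<beta> where "expansions_ok G D \<beta>" using split_steps_expansions_ok[OF assms(1-3)] ..
  then show "\<exists>H\<in>D. is_cycle H \<and> Inl e \<in> edges H \<Longrightarrow> \<exists>H\<in>C. is_cycle H \<and> Inl e \<in> edges H"
    using merge_steps_keep_cycle[OF assms(4)] by blast
  show "\<exists>H\<in>C. is_cycle H \<and> Inl e \<in> edges H \<Longrightarrow> \<exists>H\<in>D. is_cycle H \<and> Inl e \<in> edges H"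
    using merge_steps_cycle_origin[OF assms(4)] by blast
qed

theorem corollary3:
  fixes G :: "('v, 'e) mgraph" and C :: "('v, 'e + nat) mgraph set"
  assumes "wf_graph G" and "biconnected G" and "\<not> is_triangle G"
    and "triconnected_components G C"
  shows "two_half_connected G \<longleftrightarrow> \<not> (\<exists>H\<in>C. is_cycle H \<and> (\<exists>e. Inl e \<in> edges H))"
proof -
  obtain D where split: "split_step\<^sup>*\<^sup>* {embed_graph G} D"
    and final: "\<forall>H\<in>D. \<not> (biconnected H \<and> has_sep_pair H)" and merge: "merge_step\<^sup>*\<^sup>* D C"
    using assms(4) unfolding triconnected_components_def by blast
  have "(\<exists>e c. cut_pair G e c) \<longleftrightarrow> (\<exists>e. \<exists>H\<in>D. is_cycle H \<and> Inl e \<in> edges H)"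
    using cut_pair_iff_cycle_after_splits[OF split assms(1,2) final] by blast
  also have "\<dots> \<longleftrightarrow> (\<exists>H\<in>C. is_cycle H \<and> (\<exists>e. Inl e \<in> edges H))"
    using cycle_after_merges_iff[OF split assms(1,2) merge] by blast
  finally show ?thesis using two_half_connected_iff_no_cut_pair[OF assms(1-3)] by simp
qed

end
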